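(* For every fixed $\omega\in\Omega_0^*\cap\Omega_1^*$ and all real numbers $M,a,b$ with $M>0$ and $1/\alpha<a<b<1$, one has (with the convention $0/0=0$) $$\sup_{(u_1,u_2,v)\in[-M;M]^2\times[a;b]}\left\{\frac{|X(u_1,v,\omega)-X(u_2,v,\omega)|}{|u_1-u_2|^{v-1/\alpha}}\right\}<\infty.$$
   Context: Fix $\alpha\in(1,2)$. Let $Z_\alpha(ds)$ be an independently scattered symmetric $\alpha$-stable random measure on $\mathbb{R}$ with Lebesgue control measure on $(\Omega,\mathcal{F},\mathbb{P})$. For $x,\kappa\in\mathbb{R}$, $(x)_+^\kappa=x^\kappa$ if $x>0$ and $0$ otherwise. Let $\psi$ be a three times continuously differentiable compactly supported Daubechies mother wavelet generating an orthonormal basis of $L^2(\mathbb{R})$. For $(x,v)\in\mathbb{R}\times(1/\alpha;1)$, $\Psi(x,v)=\int_{\mathbb{R}}(x-s)_+^{v-1/\alpha}\psi(s)\,ds$; for $(j,k)\in\mathbb{Z}^2$, $\epsilon_{j,k}=2^{j/\alpha}\int_{\mathbb{R}}\psi(2^js-k)Z_\alpha(ds)$. $\Omega_0^*$ is an event of probability $1$ such that for every $\eta>0$ there is a positive finite random variable $C_\eta$ with $|\epsilon_{j,k}(\omega)|\le C_\eta(\omega)(3+|j|)^{1/\alpha+\eta}(3+|k|)^{1/\alpha+\eta}$ for all $\omega\in\Omega_0^*$, $(j,k)\in\mathbb{Z}^2$. $\Omega_1^*$ is an event of probability $1$ such that for every $l>0$ there is a positive finite random variable $C'_l$ with $|\epsilon_{j,k}(\omega)|\le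 C'_l(\omega)2^{j/\alpha}$ for all $\omega\in\Omega_1^*$ and all $(j,k)\in\mathbb{Z}_+\times\mathbb{Z}$ with $|k|2^{-j}\le l$ (both events exist). $X(u,v)=\int_{\mathbb{R}}\{(u-s)_+^{v-1/\alpha}-(-s)_+^{v-1/\alpha}\}Z_\alpha(ds)$ is identified with its modification defined on $\Omega_0^*$ by $X(u,v)=\sum_{(j,k)\in\mathbb{Z}^2}2^{-jv}\epsilon_{j,k}(\Psi(2^ju-k,v)-\Psi(-k,v))$, the series converging on $\Omega_0^*$ uniformly in $(u,v)$ on compact subsets of $\mathbb{R}\times(1/\alpha;1)$. *)

theory Defs
  imports "HOL-Probability.Probability"
begin

definition pospow :: "real \<Rightarrow> real \<Rightarrow> real" where
  "pospow x \<kappa> = (if x > 0 then x powr \<kappa> else 0)"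

definition wav :: "(real \<Rightarrow> real) \<Rightarrow> int \<Rightarrow> int \<Rightarrow> real \<Rightarrow> real" where
  "wav \<psi> j k x = 2 powr (real_of_int j / 2) * \<psi> (2 powr (real_of_int j) * x - real_of_int k)"

definition C3 :: "(real \<Rightarrow> real) \<Rightarrow> bool" where
  "C3 f \<longleftrightarrow> (\<forall>i<3. \<forall>x. ((deriv ^^ i) f) differentiable (at x))
               \<and> continuous_on UNIV ((deriv ^^ 3) f)"

definition ONB_wavelet :: "(real \<Rightarrow> real) \<Rightarrow> bool" where
  "ONB_wavelet \<psi> \<longleftrightarrow>
     \<psi> \<in> borel_measurable lborel \<and>
     (\<forall>j k j' k'. integrable lborel (\<lambda>x. wav \<psi> j k x * wav \<psi> j' k' x) \<and>
        (\<integral>x. wav \<psi> j k x * wav \<psi> j' k' x \<partial>lborel) = (if (j, k) = (j', k') then 1 else 0)) \<and>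
     (\<forall>f :: real \<Rightarrow> real. f \<in> borel_measurable lborel \<longrightarrow>
        integrable lborel (\<lambda>x. (f x)\<^sup>2) \<longrightarrow>
        (\<forall>j k. (\<integral>x. f x * wav \<psi> j k x \<partial>lborel) = 0) \<longrightarrow>
        (AE x in lborel. f x = 0))"

definition Psi :: "real \<Rightarrow> (real \<Rightarrow> real) \<Rightarrow> real \<Rightarrow> real \<Rightarrow> real" where
  "Psi \<alpha> \<psi> x v = (\<integral>s. pospow (x - s) (v - 1 / \<alpha>) * \<psi> s \<partial>lborel)"

definition Xser :: "real \<Rightarrow> (real \<Rightarrow> real) \<Rightarrow> (int \<Rightarrow> int \<Rightarrow> 'w \<Rightarrow> real) \<Rightarrow> real \<Rightarrow> real \<Rightarrow> 'w \<Rightarrow> real" where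
  "Xser \<alpha> \<psi> \<epsilon> u v \<omega> =
     (\<Sum>\<^sub>\<infinity>(j, k) \<in> (UNIV :: (int \<times> int) set).
        2 powr (- real_of_int j * v) * \<epsilon> j k \<omega> *
        (Psi \<alpha> \<psi> (2 powr real_of_int j * u - real_of_int k) v - Psi \<alpha> \<psi> (- real_of_int k) v))"

end

theory Submission
  imports Defs
begin

text \<open>The increment \<open>X(u1, v) - X(u2, v)\<close> is the wavelet series with terms
  \<open>2^(-jv) \<epsilon>\<^sub>j\<^sub>k (\<Psi>(2^j u1 - k, v) - \<Psi>(2^j u2 - k, v))\<close>. A compactly supported \<open>C\<^sup>2\<close> wavelet that is
  orthogonal to its dyadic dilates has vanishing moments of order 0 and 1, so the increments of
  \<open>\<Psi>(\<cdot>, v)\<close> are bounded by \<open>min 1 |y1 - y2|\<close> times \<open>(1 + |y|)^(v - 1/\<alpha> - 2)\<close>. Against the almost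
  sure bounds on \<open>\<epsilon>\<^sub>j\<^sub>k\<close> (polylogarithmic growth in \<open>j\<close> and \<open>k\<close>, and \<open>2^(j/\<alpha>)\<close> near \<open>[-M, M]\<close> on fine
  scales) the sum over the translations \<open>k\<close> costs a factor \<open>2^(j/\<alpha>)\<close> on fine scales and a geometric
  factor on coarse ones; summing \<open>2^(-j(v - 1/\<alpha>)) min 1 (2^j |u1 - u2|)\<close> over the scales then gives
  \<open>O(|u1 - u2|^(v - 1/\<alpha>))\<close>, uniformly for \<open>v \<in> [a, b]\<close>. The bound holds for every finite partial
  sum, so the series converges absolutely and the bound passes to the increment.\<close>

lemma abs_diff_le_if_deriv_bounded:
  fixes f f' :: "real \<Rightarrow> real"
  assumes "\<And>x. x \<in> {c..d} \<Longrightarrow> (f has_real_derivative f' x) (at x)"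
    and "\<And>x. x \<in> {c..d} \<Longrightarrow> \<bar>f' x\<bar> \<le> B"
    and "x \<in> {c..d}" "y \<in> {c..d}"
  shows "\<bar>f x - f y\<bar> \<le> B * \<bar>x - y\<bar>"
  using field_differentiable_bound[of "{c..d}" f f' B x y] assms
  by (auto intro: has_field_derivative_at_within)

lemma abs_taylor2_remainder_le:
  fixes f f' f'' :: "real \<Rightarrow> real"
  assumes f': "\<And>x. x \<in> {c..d} \<Longrightarrow> (f has_real_derivative f' x) (at x)"
    and f'': "\<And>x. x \<in> {c..d} \<Longrightarrow> (f' has_real_derivative f'' x) (at x)"
    and bound: "\<And>x. x \<in> {c..d} \<Longrightarrow> \<bar>f'' x\<bar> \<le> B"
    and s: "s \<in> {c..d}" and zero: "0 \<in> {c..d}"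
  shows "\<bar>f s - f 0 - s * f' 0\<bar> \<le> B * s\<^sup>2"
proof -
  define g where "g t = f t - f 0 - t * f' 0" for t
  let ?I = "{min 0 s..max 0 s}"
  have sub: "?I \<subseteq> {c..d}" using s zero by auto
  have g': "(g has_real_derivative (f' t - f' 0)) (at t)" if "t \<in> ?I" for t
    using f'[OF subsetD[OF sub that]] unfolding g_def by (auto intro!: derivative_eq_intros)
  have "0 \<le> B" using bound[OF zero] by linarith
  have "\<bar>f' t - f' 0\<bar> \<le> B * \<bar>s\<bar>" if "t \<in> ?I" for t
  proof -
    have "\<bar>f' t - f' 0\<bar> \<le> B * \<bar>t - 0\<bar>"
      by (rule abs_diff_le_if_deriv_bounded[of c d f' f'']) (use f'' bound that sub zero in auto)
    also have "\<dots> \<le> B * \<bar>s\<bar>" using that \<open>0 \<le> B\<close> by (intro mult_left_mono) auto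
    finally show ?thesis .
  qed
  then have "\<bar>g s - g 0\<bar> \<le> (B * \<bar>s\<bar>) * \<bar>s - 0\<bar>"
    by (intro abs_diff_le_if_deriv_bounded[of "min 0 s" "max 0 s" g]) (auto intro!: g')
  then show ?thesis by (simp add: g_def power2_eq_square abs_mult_self_eq mult.assoc)
qed

lemma integrable_if_bounded_by_indicator:
  fixes g :: "real \<Rightarrow> real"
  assumes "g \<in> borel_measurable borel" "\<And>x. \<bar>g x\<bar> \<le> C * indicator {a..b} x"
  shows "integrable lborel g"
proof (rule Bochner_Integration.integrable_bound[where f="\<lambda>x. C * indicator {a..b} x :: real"])
  show "integrable lborel (\<lambda>x. C * indicator {a..b} x :: real)"
    by (intro integrable_mult_right integrable_real_indicator) (auto simp: emeasure_lborel_Icc_eq)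
  show "AE x in lborel. norm (g x) \<le> norm (C * indicator {a..b} x :: real)"
    using assms(2) by (auto intro!: AE_I2 order.trans[OF _ abs_ge_self])
qed (use assms(1) in simp)

lemma abs_integral_le_if_bounded_by_indicator:
  fixes g :: "real \<Rightarrow> real"
  assumes "\<And>x. \<bar>g x\<bar> \<le> C * indicator {a..b} x" "a \<le> b"
  shows "\<bar>integral\<^sup>L lborel g\<bar> \<le> C * (b - a)"
proof -
  have "\<bar>integral\<^sup>L lborel g\<bar> \<le> (\<integral>x. \<bar>g x\<bar> \<partial>lborel)" by simp
  also have "\<dots> \<le> (\<integral>x. C * indicator {a..b} x \<partial>lborel)"
  proof (rule integral_mono')
    show "integrable lborel (\<lambda>x. C * indicator {a..b} x :: real)"
      by (intro integrable_mult_right integrable_real_indicator) (auto simp: emeasure_lborel_Icc_eq)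
  qed (use assms(1) in \<open>auto intro: order.trans[OF abs_ge_zero]\<close>)
  also have "\<dots> = C * (b - a)" using assms(2) by simp
  finally show ?thesis .
qed

lemma eq_0_if_abs_le_div_two_pow:
  fixes a K :: real
  assumes "\<And>j. J \<le> j \<Longrightarrow> \<bar>a\<bar> \<le> K / 2 ^ j"
  shows "a = 0"
proof -
  have "\<bar>a\<bar> \<le> 0"
    by (rule LIMSEQ_le_const[OF LIMSEQ_divide_realpow_zero[of 2 K]]) (use assms in auto)
  then show ?thesis by simp
qed

lemma continuous_nonzero_at_dyadic:
  fixes f :: "real \<Rightarrow> real"
  assumes "continuous_on UNIV f" "f x \<noteq> 0"
  obtains m :: int and n :: nat where "f (m / 2 ^ n) \<noteq> 0"
proof -
  obtain e where e: "e > 0" "\<And>y. dist x y < e \<Longrightarrow> f y \<noteq> 0"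
    using continuous_at_avoid[of x f 0] assms continuous_on_eq_continuous_at by blast
  obtain n :: nat where "1 / e < n" using reals_Archimedean2 by blast
  moreover have "real n < 2 ^ n" using less_exp[of n] by (metis of_nat_less_iff of_nat_numeral of_nat_power)
  ultimately have "1 / e < 2 ^ n" by linarith
  then have en: "1 / 2 ^ n < e" using e by (simp add: field_simps)
  define m where "m = \<lfloor>x * 2 ^ n\<rfloor>"
  have "\<bar>x * 2 ^ n - m\<bar> < 1" unfolding m_def by linarith
  moreover have "x - m / 2 ^ n = (x * 2 ^ n - m) / 2 ^ n" by (simp add: field_simps)
  ultimately have "\<bar>x - m / 2 ^ n\<bar> < 1 / 2 ^ n" by (simp add: divide_strict_right_mono)
  with en e show ?thesis by (intro that[of m n]) (simp add: dist_real_def)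
qed

lemma bounded_if_continuous_vanishing_outside:
  fixes f :: "real \<Rightarrow> real"
  assumes "continuous_on UNIV f" "\<And>x. R < \<bar>x\<bar> \<Longrightarrow> f x = 0"
  shows "\<exists>B. \<forall>x. \<bar>f x\<bar> \<le> B"
proof -
  have "compact (f ` {-R..R})"
    by (rule compact_continuous_image) (use assms(1) continuous_on_subset in auto)
  then obtain B where B: "\<forall>y\<in>f ` {-R..R}. norm y \<le> B"
    using compact_imp_bounded bounded_iff by metis
  have "\<bar>f x\<bar> \<le> max B 0" for x
  proof (cases "R < \<bar>x\<bar>")
    case False
    then have "x \<in> {-R..R}" by auto
    then show ?thesis using B by force
  qed (use assms(2) in simp)
  then show ?thesis by blast
qed

lemma pospow_measurable[measurable]:
  "f \<in> borel_measurable M \<Longrightarrow> (\<lambda>x. pospow (f x) k) \<in> borel_measurable M"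
  unfolding pospow_def by (rule measurable_If) auto

lemma pospow_nonneg: "0 \<le> pospow x k"
  by (simp add: pospow_def)

lemma pospow_le:
  assumes "0 < k" "k \<le> 1" "x \<le> T" "1 \<le> T"
  shows "pospow x k \<le> T"
proof (cases "x > 0")
  case True
  have "x powr k \<le> T powr k" using True assms by (intro powr_mono2) auto
  also have "\<dots> \<le> T powr 1" using assms by (intro powr_mono) auto
  finally show ?thesis using True assms by (simp add: pospow_def)
qed (use assms in \<open>simp add: pospow_def\<close>)

lemma derivative_vanishing_outside:
  fixes f f' :: "real \<Rightarrow> real"
  assumes "\<And>x. (f has_real_derivative f' x) (at x)" "\<And>x. R < \<bar>x\<bar> \<Longrightarrow> f x = 0" "R < \<bar>x\<bar>"
  shows "f' x = 0"
proof -
  have "(f has_real_derivative 0) (at x)"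
  proof (rule has_field_derivative_transform_within_open[where S="{z. R < \<bar>z\<bar>}"])
    show "open {z::real. R < \<bar>z\<bar>}" by (intro open_Collect_less continuous_intros)
  qed (use assms in auto)
  then show ?thesis using assms(1) DERIV_unique by blast
qed

lemma powr_le_cube_mult_powr:
  fixes x y c e :: real
  assumes "0 < y" "1 \<le> c" "y \<le> c * x" "-3 \<le> e" "e \<le> 0"
  shows "x powr e \<le> c ^ 3 * y powr e"
proof -
  have "x powr e \<le> (y / c) powr e" using assms by (intro powr_mono2') (auto simp: field_simps)
  also have "\<dots> = y powr e * c powr (- e)"
    using assms by (subst powr_divide) (auto simp: powr_minus divide_inverse)
  also have "\<dots> \<le> y powr e * c powr 3" using assms by (intro mult_left_mono powr_mono) auto
  also have "c powr 3 = c ^ 3" using assms by (simp add: powr_realpow)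
  finally show ?thesis by (simp add: mult.commute)
qed

lemma le_mult_square_mult_powr:
  fixes z C x T e :: real
  assumes "z \<le> C" "0 \<le> C" "1 \<le> x" "x \<le> T" "-2 \<le> e" "e \<le> 0"
  shows "z \<le> C * T ^ 2 * x powr e"
proof -
  have "T powr (-2) \<le> T powr e" using assms by (intro powr_mono) auto
  also have "\<dots> \<le> x powr e" using assms by (intro powr_mono2') auto
  finally have "T ^ 2 * T powr (-2) \<le> T ^ 2 * x powr e" by (intro mult_left_mono) auto
  moreover have "T ^ 2 * T powr (-2) = 1"
    using assms by (simp add: powr_minus powr_realpow[of T 2, simplified])
  ultimately have "C * 1 \<le> C * (T ^ 2 * x powr e)" using assms(2) by (intro mult_left_mono) auto
  with assms(1) show ?thesis by (simp add: mult.assoc)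
qed

lemma abs_powr_diff_le:
  fixes r1 r2 m e :: real
  assumes "0 < m" "m \<le> r1" "m \<le> r2" "e \<le> 0"
  shows "\<bar>r1 powr e - r2 powr e\<bar> \<le> (\<bar>e\<bar> * m powr (e - 1)) * \<bar>r1 - r2\<bar>"
proof (rule abs_diff_le_if_deriv_bounded[of "min r1 r2" "max r1 r2" _ "\<lambda>r. e * r powr (e - 1)"])
  fix x assume "x \<in> {min r1 r2..max r1 r2}"
  then have "m \<le> x" using assms by auto
  show "((\<lambda>r. r powr e) has_real_derivative e * x powr (e - 1)) (at x)"
    using \<open>m \<le> x\<close> assms by (intro has_real_derivative_powr) auto
  have "x powr (e - 1) \<le> m powr (e - 1)" using \<open>m \<le> x\<close> assms by (intro powr_mono2') auto
  then show "\<bar>e * x powr (e - 1)\<bar> \<le> \<bar>e\<bar> * m powr (e - 1)"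
    by (simp add: abs_mult mult_left_mono)
qed auto

lemma abs_mult_diff_one_le_one:
  assumes "0 < (\<gamma>::real)" "\<gamma> < 1"
  shows "\<bar>\<gamma> * (\<gamma> - 1)\<bar> \<le> 1"
proof -
  have "\<gamma> * (1 - \<gamma>) \<le> 1 * 1" using assms by (intro mult_mono) auto
  moreover have "0 \<le> \<gamma> * (1 - \<gamma>)" using assms by simp
  ultimately show ?thesis by (simp add: abs_if algebra_simps)
qed

lemma abs_powr_second_diff_le:
  fixes \<gamma> m r1 r2 :: real
  assumes "0 < \<gamma>" "\<gamma> < 1" "0 < m" "m / 2 \<le> r1" "m / 2 \<le> r2"
  shows "\<bar>\<gamma> * (\<gamma> - 1) * (r1 powr (\<gamma> - 2) - r2 powr (\<gamma> - 2))\<bar> \<le> 16 * \<bar>r1 - r2\<bar> * m powr (\<gamma> - 3)"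
proof -
  have "\<bar>r1 powr (\<gamma> - 2) - r2 powr (\<gamma> - 2)\<bar> \<le> (\<bar>\<gamma> - 2\<bar> * (m / 2) powr (\<gamma> - 3)) * \<bar>r1 - r2\<bar>"
    using abs_powr_diff_le[of "m / 2" r1 r2 "\<gamma> - 2"] assms by simp
  also have "\<dots> \<le> (2 * (2 ^ 3 * m powr (\<gamma> - 3))) * \<bar>r1 - r2\<bar>"
    using assms by (intro mult_right_mono mult_mono powr_le_cube_mult_powr) auto
  finally have "\<bar>r1 powr (\<gamma> - 2) - r2 powr (\<gamma> - 2)\<bar> \<le> 16 * \<bar>r1 - r2\<bar> * m powr (\<gamma> - 3)"
    by (simp add: mult_ac)
  moreover have "\<bar>\<gamma> * (\<gamma> - 1)\<bar> * \<bar>r1 powr (\<gamma> - 2) - r2 powr (\<gamma> - 2)\<bar> \<le> \<bar>r1 powr (\<gamma> - 2) - r2 powr (\<gamma> - 2)\<bar>"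
    using abs_mult_diff_one_le_one[OF assms(1,2)] by (simp add: mult_left_le_one_le)
  ultimately show ?thesis unfolding abs_mult[of "\<gamma> * (\<gamma> - 1)"] by linarith
qed

lemma three_plus_le_two_powr:
  fixes c x :: real
  assumes "0 < c" "0 \<le> x"
  shows "3 + x \<le> (3 + 1 / (c * ln 2)) * 2 powr (c * x)"
proof -
  have "1 + c * x * ln 2 \<le> 2 powr (c * x)"
    using exp_ge_add_one_self[of "c * x * ln 2"] by (simp add: powr_def mult_ac)
  then have "x \<le> (2 powr (c * x) - 1) / (c * ln 2)" using assms by (simp add: field_simps)
  also have "\<dots> \<le> 2 powr (c * x) / (c * ln 2)" using assms by (intro divide_right_mono) auto
  finally have "3 + x \<le> 3 + 2 powr (c * x) / (c * ln 2)" by simp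
  also have "1 \<le> 2 powr (c * x)" using assms by (intro ge_one_powr_ge_zero) auto
  then have "3 + 2 powr (c * x) / (c * ln 2) \<le> (3 + 1 / (c * ln 2)) * 2 powr (c * x)"
    by (simp add: algebra_simps)
  finally show ?thesis .
qed

lemma three_plus_abs_le_near:
  fixes y M :: real
  assumes "\<bar>y\<bar> \<le> M"
  shows "3 + \<bar>real_of_int k\<bar> \<le> (3 + M) * (1 + \<bar>y - real_of_int k\<bar>)"
proof -
  have "\<bar>real_of_int k\<bar> \<le> \<bar>y\<bar> + \<bar>y - real_of_int k\<bar>" by linarith
  moreover have "0 \<le> M * \<bar>y - real_of_int k\<bar>" using assms by simp
  moreover have "(3 + M) * (1 + \<bar>y - real_of_int k\<bar>) = 3 + M + M * \<bar>y - real_of_int k\<bar> + 3 * \<bar>y - real_of_int k\<bar>"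
    by (simp add: algebra_simps)
  ultimately show ?thesis using assms abs_ge_zero[of "y - real_of_int k"] by linarith
qed

lemma three_plus_abs_le_far:
  fixes y :: real
  assumes "2 * \<bar>y\<bar> < \<bar>real_of_int k\<bar>"
  shows "3 + \<bar>real_of_int k\<bar> \<le> 3 * (1 + \<bar>y - real_of_int k\<bar>)"
proof -
  have "\<bar>real_of_int k\<bar> \<le> \<bar>y\<bar> + \<bar>y - real_of_int k\<bar>" by linarith
  moreover have "3 * (1 + \<bar>y - real_of_int k\<bar>) = 3 + 3 * \<bar>y - real_of_int k\<bar>" by simp
  ultimately show ?thesis using assms abs_ge_zero[of "y - real_of_int k"] by linarith
qed

lemma weighted_term_le:
  fixes x c L p e s w :: real
  assumes "\<bar>x\<bar> \<le> c * (3 + \<bar>real_of_int k\<bar>) powr p" "3 + \<bar>real_of_int k\<bar> \<le> L * w"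
    and "0 \<le> c" "0 \<le> p" "1 \<le> w" "p + e \<le> - s"
  shows "\<bar>x\<bar> * w powr e \<le> c * L powr p * w powr (- s)"
proof -
  have "0 < L * w" using assms(2) abs_ge_zero[of "real_of_int k"] by linarith
  then have "0 < L" using assms(5) zero_less_mult_pos2 by fastforce
  have "\<bar>x\<bar> * w powr e \<le> c * (L * w) powr p * w powr e"
    using assms by (intro mult_right_mono mult_left_mono order.trans[OF assms(1)] powr_mono2) auto
  also have "\<dots> = c * L powr p * w powr (p + e)"
    using \<open>0 < L\<close> assms(5) by (simp add: powr_mult powr_add)
  also have "\<dots> \<le> c * L powr p * w powr (- s)"
    using assms by (intro mult_left_mono powr_mono) auto
  finally show ?thesis .
qed

lemma le_max_mult_powr:
  fixes h \<gamma> c :: real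
  assumes "0 < h" "h \<le> c" "0 < \<gamma>" "\<gamma> < 1"
  shows "h \<le> max 1 c * h powr \<gamma>"
proof -
  have "h powr (1 - \<gamma>) \<le> max 1 c powr (1 - \<gamma>)" using assms by (intro powr_mono2) auto
  also have "\<dots> \<le> max 1 c powr 1" using assms by (intro powr_mono) auto
  finally have "h powr \<gamma> * h powr (1 - \<gamma>) \<le> h powr \<gamma> * max 1 c" by (intro mult_left_mono) auto
  moreover have "h = h powr \<gamma> * h powr (1 - \<gamma>)" using assms by (simp add: powr_add[symmetric])
  ultimately show ?thesis by (simp add: mult.commute)
qed

section \<open>Lattice sums\<close>

lemma sum_le_twice_suminf_shifted:
  fixes g :: "nat \<Rightarrow> real" and f :: "int \<Rightarrow> real"
  assumes g: "summable g" "\<And>n. 0 \<le> g n" and S: "finite S"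
    and f: "\<And>k. k \<in> S \<Longrightarrow> f k \<le> g (nat \<bar>k - m\<bar>)"
  shows "(\<Sum>k\<in>S. f k) \<le> 2 * suminf g"
proof -
  have half: "(\<Sum>k\<in>T. g (nat \<bar>k - m\<bar>)) \<le> suminf g" if "T \<subseteq> S" "inj_on (\<lambda>k. nat \<bar>k - m\<bar>) T" for T
  proof -
    have "(\<Sum>k\<in>T. g (nat \<bar>k - m\<bar>)) = sum g ((\<lambda>k. nat \<bar>k - m\<bar>) ` T)"
      using that(2) by (simp add: sum.reindex)
    also have "\<dots> \<le> suminf g" using g S that(1) by (intro sum_le_suminf) (auto intro: finite_subset)
    finally show ?thesis .
  qed
  have "(\<Sum>k\<in>S. f k) \<le> (\<Sum>k\<in>S. g (nat \<bar>k - m\<bar>))" using f by (rule sum_mono)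
  also have "\<dots> = (\<Sum>k\<in>S \<inter> {m..}. g (nat \<bar>k - m\<bar>)) + (\<Sum>k\<in>S - {m..}. g (nat \<bar>k - m\<bar>))"
    using S by (rule sum.Int_Diff)
  also have "\<dots> \<le> suminf g + suminf g"
    by (intro add_mono half) (auto simp: inj_on_def)
  finally show ?thesis by simp
qed

lemma sum_lattice_powr_bounded:
  fixes s :: real
  assumes "1 < s"
  obtains Z where "0 \<le> Z" "\<And>y S. finite S \<Longrightarrow> (\<Sum>k\<in>S. (1 + \<bar>y - real_of_int k\<bar>) powr (- s)) \<le> Z"
proof -
  have "summable (\<lambda>n::nat. real (Suc n) powr (- s))"
    using assms summable_real_powr_iff by (subst summable_Suc_iff) simp
  then have sm: "summable (\<lambda>n. 2 powr s * (1 + real n) powr (- s))"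
    by (simp add: summable_mult add.commute)
  define Z where "Z = 2 * (\<Sum>n. 2 powr s * (1 + real n) powr (- s))"
  have "0 \<le> Z" unfolding Z_def by (intro mult_nonneg_nonneg suminf_nonneg[OF sm]) auto
  moreover have "(\<Sum>k\<in>S. (1 + \<bar>y - real_of_int k\<bar>) powr (- s)) \<le> Z" if "finite S" for y S
    unfolding Z_def
  proof (rule sum_le_twice_suminf_shifted[OF sm _ that, where m="\<lfloor>y\<rfloor>"])
    fix k
    define m where "m = \<lfloor>y\<rfloor>"
    have "real_of_int m \<le> y" "y < real_of_int m + 1" unfolding m_def by linarith+
    then have "\<bar>real_of_int k - real_of_int m\<bar> \<le> 2 * \<bar>y - real_of_int k\<bar> + 1" by (auto simp: abs_if)
    then have le: "(1 + real (nat \<bar>k - m\<bar>)) / 2 \<le> 1 + \<bar>y - real_of_int k\<bar>" by simp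
    have "(1 + \<bar>y - real_of_int k\<bar>) powr (- s) \<le> ((1 + real (nat \<bar>k - m\<bar>)) / 2) powr (- s)"
      by (rule powr_mono2'[OF _ _ le]) (use assms in simp_all)
    also have "\<dots> = (1 + real (nat \<bar>k - m\<bar>)) powr (- s) / 2 powr (- s)"
      by (rule powr_divide)
    also have "\<dots> = 2 powr s * (1 + real (nat \<bar>k - m\<bar>)) powr (- s)"
      by (simp add: powr_minus divide_inverse mult.commute)
    finally show "(1 + \<bar>y - real_of_int k\<bar>) powr (- s) \<le> 2 powr s * (1 + real (nat \<bar>k - \<lfloor>y\<rfloor>\<bar>)) powr (- s)"
      by (simp add: m_def)
  qed simp
  ultimately show ?thesis using that by blast
qed

lemma summable_two_powr_power:
  assumes "0 < (c::real)"
  shows "summable (\<lambda>n. ((2::real) powr (- c)) ^ n)"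
  using assms by (intro summable_geometric) (simp add: powr_minus inverse_less_1_iff)

lemma sum_two_powr_nonpos_bounded:
  fixes c :: real
  assumes "0 < c"
  obtains Q where "0 \<le> Q" "\<And>F. finite F \<Longrightarrow> (\<And>j. j \<in> F \<Longrightarrow> j \<le> 0) \<Longrightarrow> (\<Sum>j\<in>F. 2 powr (real_of_int j * c)) \<le> Q"
proof
  show "0 \<le> 2 * (\<Sum>n. (2 powr (- c)) ^ n)"
    using suminf_nonneg[OF summable_two_powr_power[OF assms]] by simp
  fix F :: "int set" assume F: "finite F" "\<And>j. j \<in> F \<Longrightarrow> j \<le> 0"
  show "(\<Sum>j\<in>F. 2 powr (real_of_int j * c)) \<le> 2 * (\<Sum>n. (2 powr (- c)) ^ n)"
  proof (rule sum_le_twice_suminf_shifted[OF summable_two_powr_power[OF assms] _ F(1), where m=0])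
    fix j assume "j \<in> F"
    then have "real (nat \<bar>j - 0\<bar>) = - real_of_int j" using F(2) by simp
    then show "2 powr (real_of_int j * c) \<le> (2 powr (- c)) ^ nat \<bar>j - 0\<bar>"
      by (simp add: powr_power)
  qed simp
qed

lemma two_powr_mult_min_le:
  fixes \<gamma> g0 g1 t :: real
  assumes g: "0 < g0" "g0 \<le> \<gamma>" "\<gamma> \<le> g1" "g1 < 1"
  shows "2 powr (- t * \<gamma>) * min 1 (2 powr t)
    \<le> (2 powr (- g0)) ^ nat \<bar>\<lfloor>t\<rfloor>\<bar> + 2 * (2 powr (- (1 - g1))) ^ nat \<bar>\<lfloor>t\<rfloor>\<bar>"
proof -
  define i where "i = \<lfloor>t\<rfloor>"
  have i: "real_of_int i \<le> t" "t < real_of_int i + 1" unfolding i_def by linarith+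
  show ?thesis
  proof (cases "0 \<le> t")
    case True
    have "2 powr (- t * \<gamma>) * min 1 (2 powr t) \<le> 2 powr (- t * \<gamma>)" by (simp add: mult_left_le)
    also have "\<dots> \<le> 2 powr (- real_of_int i * g0)"
    proof -
      have "real_of_int i * g0 \<le> t * g0" using i g by (intro mult_right_mono) auto
      also have "\<dots> \<le> t * \<gamma>" using True g by (intro mult_left_mono) auto
      finally show ?thesis by simp
    qed
    also have "\<dots> = (2 powr (- g0)) ^ nat \<bar>i\<bar>"
      using i True by (simp add: powr_power)
    finally show ?thesis by (simp add: i_def add_increasing2)
  next
    case False
    have "2 powr (- t * \<gamma>) * min 1 (2 powr t) \<le> 2 powr (- t * \<gamma>) * 2 powr t"
      by (intro mult_left_mono) auto
    also have "\<dots> = 2 powr (t * (1 - \<gamma>))" by (simp add: powr_add[symmetric] algebra_simps)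
    also have "\<dots> \<le> 2 powr ((real_of_int i + 1) * (1 - g1))"
    proof -
      have "t * (1 - \<gamma>) \<le> t * (1 - g1)" using False g by (intro mult_left_mono_neg) auto
      also have "\<dots> \<le> (real_of_int i + 1) * (1 - g1)" using i g by (intro mult_right_mono) auto
      finally show ?thesis by simp
    qed
    also have "\<dots> = 2 powr (1 - g1) * 2 powr (real_of_int i * (1 - g1))"
      by (simp add: powr_add[symmetric] algebra_simps)
    also have "\<dots> \<le> 2 * 2 powr (real_of_int i * (1 - g1))"
      using g powr_mono[of "1 - g1" 1 2] by (intro mult_right_mono) auto
    also have "2 powr (real_of_int i * (1 - g1)) = (2 powr (- (1 - g1))) ^ nat \<bar>i\<bar>"
      using i False by (simp add: powr_power algebra_simps)
    finally show ?thesis by (simp add: i_def add_increasing)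
  qed
qed

lemma sum_two_powr_mult_min_bounded:
  fixes g0 g1 :: real
  assumes g: "0 < g0" "g1 < 1"
  obtains Q where "0 \<le> Q" "\<And>\<gamma> h F. g0 \<le> \<gamma> \<Longrightarrow> \<gamma> \<le> g1 \<Longrightarrow> 0 < h \<Longrightarrow> finite F \<Longrightarrow>
    (\<Sum>j\<in>F. 2 powr (- real_of_int j * \<gamma>) * min 1 (2 powr real_of_int j * h)) \<le> Q * h powr \<gamma>"
proof -
  define g where "g n = (2 powr (- g0)) ^ n + 2 * (2 powr (- (1 - g1))) ^ n" for n
  have "summable g" unfolding g_def
    using g by (intro summable_add summable_mult summable_two_powr_power) auto
  have "0 \<le> g n" for n by (simp add: g_def)
  have "(\<Sum>j\<in>F. 2 powr (- real_of_int j * \<gamma>) * min 1 (2 powr real_of_int j * h)) \<le> 2 * suminf g * h powr \<gamma>"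
    if \<gamma>: "g0 \<le> \<gamma>" "\<gamma> \<le> g1" and "0 < h" "finite F" for \<gamma> h F
  proof -
    define a where "a = log 2 h"
    have "h = 2 powr a" using \<open>0 < h\<close> by (simp add: a_def)
    have rescale: "2 powr (- real_of_int j * \<gamma>) * min 1 (2 powr real_of_int j * h)
        = h powr \<gamma> * (2 powr (- (j + a) * \<gamma>) * min 1 (2 powr (j + a)))" for j
    proof -
      have "2 powr real_of_int j * h = 2 powr (j + a)" by (simp add: \<open>h = 2 powr a\<close> powr_add)
      moreover have "2 powr (- real_of_int j * \<gamma>) = h powr \<gamma> * 2 powr (- (j + a) * \<gamma>)"
        by (simp add: \<open>h = 2 powr a\<close> powr_powr powr_add[symmetric] algebra_simps)
      ultimately show ?thesis by simp
    qed
    have "(\<Sum>j\<in>F. 2 powr (- (j + a) * \<gamma>) * min 1 (2 powr (j + a))) \<le> 2 * suminf g"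
    proof (rule sum_le_twice_suminf_shifted[OF \<open>summable g\<close> \<open>0 \<le> g _\<close> \<open>finite F\<close>, where m="- \<lfloor>a\<rfloor>"])
      fix j
      have "\<lfloor>real_of_int j + a\<rfloor> = j - - \<lfloor>a\<rfloor>" by linarith
      then show "2 powr (- (j + a) * \<gamma>) * min 1 (2 powr (j + a)) \<le> g (nat \<bar>j - - \<lfloor>a\<rfloor>\<bar>)"
        using two_powr_mult_min_le[of g0 \<gamma> g1 "j + a"] g \<gamma> by (simp add: g_def)
    qed
    from mult_left_mono[OF this, of "h powr \<gamma>"] show ?thesis
      unfolding rescale sum_distrib_left[symmetric] by (simp add: mult_ac)
  qed
  moreover have "0 \<le> 2 * suminf g" using suminf_nonneg[OF \<open>summable g\<close> \<open>0 \<le> g _\<close>] by simp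
  ultimately show ?thesis using that by blast
qed

lemma abs_summable_if_finite_sums_bounded:
  fixes f :: "'a \<Rightarrow> real"
  assumes "\<And>F. finite F \<Longrightarrow> (\<Sum>x\<in>F. \<bar>f x\<bar>) \<le> B"
  shows "f summable_on UNIV" "\<bar>infsum f UNIV\<bar> \<le> B"
proof -
  have abs: "(\<lambda>x. norm (f x)) summable_on UNIV"
    using assms by (intro nonneg_bdd_above_summable_on bdd_aboveI[where M=B]) auto
  then show "f summable_on UNIV" using summable_on_iff_abs_summable_on_real by blast
  have "norm (infsum f UNIV) \<le> infsum (\<lambda>x. norm (f x)) UNIV"
    by (rule norm_infsum_bound) (use abs in simp)
  also have "\<dots> \<le> B" using abs assms by (intro infsum_le_finite_sums) auto
  finally show "\<bar>infsum f UNIV\<bar> \<le> B" by simp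
qed

lemma sum_le_sum_rows:
  fixes f :: "'a \<times> 'b \<Rightarrow> real"
  assumes "finite F" "\<And>x. 0 \<le> f x"
  shows "(\<Sum>x\<in>F. f x) \<le> (\<Sum>j\<in>fst ` F. \<Sum>k\<in>snd ` F. f (j, k))"
proof -
  have "(\<Sum>x\<in>F. f x) \<le> (\<Sum>x\<in>fst ` F \<times> snd ` F. f x)"
    using assms by (intro sum_mono2) (auto intro: rev_image_eqI)
  also have "\<dots> = (\<Sum>j\<in>fst ` F. \<Sum>k\<in>snd ` F. f (j, k))"
    by (simp add: sum.cartesian_product case_prod_beta)
  finally show ?thesis .
qed

section \<open>Vanishing moments of a compactly supported wavelet\<close>

locale compact_wavelet =
  fixes \<psi> \<psi>' \<psi>'' :: "real \<Rightarrow> real" and R :: real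
  assumes R_ge_1: "1 \<le> R"
    and support: "\<And>x. R < \<bar>x\<bar> \<Longrightarrow> \<psi> x = 0"
    and has_deriv: "\<And>x. (\<psi> has_real_derivative \<psi>' x) (at x)"
    and has_deriv2: "\<And>x. (\<psi>' has_real_derivative \<psi>'' x) (at x)"
    and continuous_deriv2: "continuous_on UNIV \<psi>''"
    and nonzero: "\<exists>x. \<psi> x \<noteq> 0"
    and orthogonal_dilates:
      "\<And>(j::nat) k. 1 \<le> j \<Longrightarrow> (\<integral>x. \<psi> x * \<psi> (2 ^ j * x - real_of_int k) \<partial>lborel) = 0"
begin

lemma support': "R < \<bar>x\<bar> \<Longrightarrow> \<psi>' x = 0"
  by (rule derivative_vanishing_outside[OF has_deriv support])

lemma support'': "R < \<bar>x\<bar> \<Longrightarrow> \<psi>'' x = 0"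
  by (rule derivative_vanishing_outside[OF has_deriv2 support'])

lemma continuous: "continuous_on UNIV \<psi>"
  using has_deriv DERIV_isCont continuous_at_imp_continuous_on by blast

lemma continuous': "continuous_on UNIV \<psi>'"
  using has_deriv2 DERIV_isCont continuous_at_imp_continuous_on by blast

lemma borel_measurable[measurable]: "\<psi> \<in> borel_measurable borel"
  by (rule borel_measurable_continuous_onI[OF continuous])

definition "B0 = (SOME B. \<forall>x. \<bar>\<psi> x\<bar> \<le> B)"
definition "B1 = (SOME B. \<forall>x. \<bar>\<psi>' x\<bar> \<le> B)"
definition "B2 = (SOME B. \<forall>x. \<bar>\<psi>'' x\<bar> \<le> B)"

lemma abs_le_B0: "\<bar>\<psi> x\<bar> \<le> B0"
  using someI_ex[OF bounded_if_continuous_vanishing_outside[OF continuous support]]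
  unfolding B0_def by blast

lemma abs_deriv_le_B1: "\<bar>\<psi>' x\<bar> \<le> B1"
  using someI_ex[OF bounded_if_continuous_vanishing_outside[OF continuous' support']]
  unfolding B1_def by blast

lemma abs_deriv2_le_B2: "\<bar>\<psi>'' x\<bar> \<le> B2"
  using someI_ex[OF bounded_if_continuous_vanishing_outside[OF continuous_deriv2 support'']]
  unfolding B2_def by blast

lemma B0_nonneg: "0 \<le> B0" using abs_le_B0[of 0] by linarith
lemma B1_nonneg: "0 \<le> B1" using abs_deriv_le_B1[of 0] by linarith
lemma B2_nonneg: "0 \<le> B2" using abs_deriv2_le_B2[of 0] by linarith

lemma lipschitz: "\<bar>\<psi> x - \<psi> y\<bar> \<le> B1 * \<bar>x - y\<bar>"
  by (rule abs_diff_le_if_deriv_bounded[of "min x y" "max x y" \<psi> \<psi>'])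
    (use has_deriv abs_deriv_le_B1 in auto)

lemma abs_taylor2_remainder_le_B2: "\<bar>\<psi> (t + x0) - \<psi> x0 - t * \<psi>' x0\<bar> \<le> B2 * t\<^sup>2"
proof -
  have "((\<lambda>t. \<psi> (t + x0)) has_real_derivative \<psi>' (s + x0)) (at s)"
       "((\<lambda>t. \<psi>' (t + x0)) has_real_derivative \<psi>'' (s + x0)) (at s)" for s
    using has_deriv[of "s + x0"] has_deriv2[of "s + x0"] DERIV_shift by blast+
  then show ?thesis
    using abs_taylor2_remainder_le[of "min 0 t" "max 0 t" "\<lambda>t. \<psi> (t + x0)" "\<lambda>t. \<psi>' (t + x0)"
        "\<lambda>t. \<psi>'' (t + x0)" B2 t] abs_deriv2_le_B2 by simp
qed

lemma integrable_mult:
  assumes "g \<in> borel_measurable borel" "\<And>y. \<bar>y\<bar> \<le> R \<Longrightarrow> \<bar>g y\<bar> \<le> C"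
  shows "integrable lborel (\<lambda>y. g y * \<psi> y)"
proof (rule integrable_if_bounded_by_indicator[where C="C * B0" and a="-R" and b=R])
  fix y show "\<bar>g y * \<psi> y\<bar> \<le> C * B0 * indicator {-R..R} y"
    using assms(2)[of y] abs_le_B0[of y] support[of y]
    by (cases "\<bar>y\<bar> \<le> R") (auto simp: abs_mult indicator_def intro: mult_mono)
qed (use assms(1) in measurable)

lemma abs_integral_mult_le:
  assumes "\<And>y. \<bar>y\<bar> \<le> R \<Longrightarrow> \<bar>g y\<bar> \<le> C"
  shows "\<bar>\<integral>y. g y * \<psi> y \<partial>lborel\<bar> \<le> 2 * R * B0 * C"
proof -
  have "\<bar>\<integral>y. g y * \<psi> y \<partial>lborel\<bar> \<le> C * B0 * (R - - R)"
  proof (rule abs_integral_le_if_bounded_by_indicator)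
    fix y show "\<bar>g y * \<psi> y\<bar> \<le> C * B0 * indicator {-R..R} y"
      using assms[of y] abs_le_B0[of y] support[of y]
      by (cases "\<bar>y\<bar> \<le> R") (auto simp: abs_mult indicator_def intro: mult_mono)
  qed (use R_ge_1 in simp)
  then show ?thesis by (simp add: mult_ac)
qed

lemma integrable: "integrable lborel \<psi>"
  using integrable_mult[of "\<lambda>_. 1" 1] by simp

lemma integrable_moment1: "integrable lborel (\<lambda>x. x * \<psi> x)"
  by (rule integrable_mult[of _ R]) auto

lemma integral_dyadic_translate_dilate_eq_0:
  assumes "max n 1 \<le> j"
  shows "(\<integral>y. \<psi> (y / 2 ^ j + real_of_int m / 2 ^ n) * \<psi> y \<partial>lborel) = 0"
proof -
  define k where "k = m * 2 ^ (j - n)"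
  have "(2::real) ^ j = 2 ^ (j - n) * 2 ^ n" using assms by (simp flip: power_add)
  then have k: "real_of_int k / 2 ^ j = real_of_int m / 2 ^ n" by (simp add: k_def)
  define c :: real where "c = 1 / 2 ^ j"
  have "c \<noteq> 0" by (simp add: c_def)
  have "0 = (\<integral>x. \<psi> x * \<psi> (2 ^ j * x - real_of_int k) \<partial>lborel)"
    using orthogonal_dilates assms by simp
  also have "\<dots> = \<bar>c\<bar> * (\<integral>x. \<psi> (real_of_int k / 2 ^ j + c * x) *
      \<psi> (2 ^ j * (real_of_int k / 2 ^ j + c * x) - real_of_int k) \<partial>lborel)"
    using lborel_integral_real_affine[OF \<open>c \<noteq> 0\<close>, of "\<lambda>x. \<psi> x * \<psi> (2 ^ j * x - real_of_int k)"]
    by simp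
  also have "(\<lambda>x. \<psi> (real_of_int k / 2 ^ j + c * x) * \<psi> (2 ^ j * (real_of_int k / 2 ^ j + c * x) - real_of_int k))
      = (\<lambda>y. \<psi> (y / 2 ^ j + real_of_int k / 2 ^ j) * \<psi> y)"
    by (rule ext) (simp add: c_def field_simps)
  finally show ?thesis using \<open>c \<noteq> 0\<close> by (simp add: k)
qed

lemma abs_integral_increment_le:
  "\<bar>\<integral>y. (\<psi> (y * h + x0) - \<psi> x0) * \<psi> y \<partial>lborel\<bar> \<le> 2 * R * B0 * (B1 * R * \<bar>h\<bar>)"
proof (rule abs_integral_mult_le)
  fix y assume "\<bar>y\<bar> \<le> R"
  have "\<bar>\<psi> (y * h + x0) - \<psi> x0\<bar> \<le> B1 * (\<bar>y\<bar> * \<bar>h\<bar>)"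
    using lipschitz[of "y * h + x0" x0] by (simp add: abs_mult)
  also have "\<dots> \<le> B1 * R * \<bar>h\<bar>"
    using \<open>\<bar>y\<bar> \<le> R\<close> B1_nonneg by (simp add: mult.assoc mult_left_mono mult_right_mono)
  finally show "\<bar>\<psi> (y * h + x0) - \<psi> x0\<bar> \<le> B1 * R * \<bar>h\<bar>" .
qed

lemma abs_taylor2_remainder_on_support:
  assumes "\<bar>y\<bar> \<le> R"
  shows "\<bar>\<psi> (y * h + x0) - \<psi> x0 - y * h * \<psi>' x0\<bar> \<le> B2 * h\<^sup>2 * R\<^sup>2"
proof -
  have "y\<^sup>2 \<le> R\<^sup>2" using assms R_ge_1 abs_le_square_iff[of y R] by simp
  then have "h\<^sup>2 * y\<^sup>2 \<le> h\<^sup>2 * R\<^sup>2" by (rule mult_left_mono) simp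
  then have "(y * h)\<^sup>2 \<le> h\<^sup>2 * R\<^sup>2" by (simp add: power_mult_distrib mult.commute)
  from mult_left_mono[OF this B2_nonneg] abs_taylor2_remainder_le_B2[of "y * h" x0]
  show ?thesis by (simp add: mult.assoc)
qed

text \<open>Both moments vanish: at a dyadic point \<open>x0 = m / 2^n\<close> orthogonality gives
  \<open>\<integral> \<psi>(y/2^j + x0) \<psi>(y) dy = 0\<close> for large \<open>j\<close>, and expanding \<open>\<psi>\<close> around \<open>x0\<close> to first
  (second) order shows that \<open>\<psi> x0 \<integral> \<psi>\<close> (\<open>\<psi>' x0 \<integral> y \<psi>\<close>) is \<open>O(2^-j)\<close>. By continuity some
  dyadic point has \<open>\<psi> x0 \<noteq> 0\<close> (\<open>\<psi>' x0 \<noteq> 0\<close>).\<close>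

lemma integral_eq_0: "(\<integral>x. \<psi> x \<partial>lborel) = 0"
proof -
  obtain x1 where "\<psi> x1 \<noteq> 0" using nonzero by blast
  then obtain m n where x0: "\<psi> (real_of_int m / 2 ^ n) \<noteq> 0"
    using continuous_nonzero_at_dyadic[OF continuous] by blast
  define x0 where "x0 = real_of_int m / 2 ^ n"
  define I where "I = (\<integral>x. \<psi> x \<partial>lborel)"
  have "\<bar>\<psi> x0 * I\<bar> \<le> (2 * R * B0 * B1 * R) / 2 ^ j" if j: "max n 1 \<le> j" for j
  proof -
    have "integrable lborel (\<lambda>y. \<psi> (y / 2 ^ j + x0) * \<psi> y)"
      using abs_le_B0 by (intro integrable_mult) auto
    then have "(\<integral>y. (\<psi> (y * (1 / 2 ^ j) + x0) - \<psi> x0) * \<psi> y \<partial>lborel)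
        = (\<integral>y. \<psi> (y / 2 ^ j + x0) * \<psi> y \<partial>lborel) - \<psi> x0 * I"
      using integrable by (simp add: left_diff_distrib I_def)
    also have "\<dots> = - (\<psi> x0 * I)"
      using integral_dyadic_translate_dilate_eq_0[OF j] by (simp add: x0_def)
    finally show ?thesis using abs_integral_increment_le[of "1 / 2 ^ j" x0] by simp
  qed
  then have "\<psi> x0 * I = 0" by (intro eq_0_if_abs_le_div_two_pow[where J="max n 1"]) auto
  with x0 show ?thesis by (simp add: x0_def I_def)
qed

lemma deriv_nonzero: "\<exists>x. \<psi>' x \<noteq> 0"
proof (rule ccontr)
  assume "\<not> (\<exists>x. \<psi>' x \<noteq> 0)"
  then have "\<psi> x = \<psi> (R + 1)" for x using has_deriv DERIV_isconst_all by metis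
  moreover have "\<psi> (R + 1) = 0" using support R_ge_1 by simp
  ultimately show False using nonzero by simp
qed

lemma integral_moment1_eq_0: "(\<integral>x. x * \<psi> x \<partial>lborel) = 0"
proof -
  obtain x1 where "\<psi>' x1 \<noteq> 0" using deriv_nonzero by blast
  then obtain m n where x0: "\<psi>' (real_of_int m / 2 ^ n) \<noteq> 0"
    using continuous_nonzero_at_dyadic[OF continuous'] by blast
  define x0 where "x0 = real_of_int m / 2 ^ n"
  define I where "I = (\<integral>x. x * \<psi> x \<partial>lborel)"
  have "\<bar>\<psi>' x0 * I\<bar> \<le> (2 * R * B0 * B2 * R\<^sup>2) / 2 ^ j" if j: "max n 1 \<le> j" for j
  proof -
    define h :: real where "h = 1 / 2 ^ j"
    have "0 < h" by (simp add: h_def)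
    define r where "r y = \<psi> (y * h + x0) - \<psi> x0 - y * h * \<psi>' x0" for y
    have "integrable lborel (\<lambda>y. r y * \<psi> y)"
      unfolding r_def by (intro integrable_mult[where C="B2 * h\<^sup>2 * R\<^sup>2"] abs_taylor2_remainder_on_support) auto
    moreover have "(\<lambda>y. \<psi> (y / 2 ^ j + x0) * \<psi> y) = (\<lambda>y. r y * \<psi> y + (\<psi> x0 * \<psi> y + (h * \<psi>' x0) * (y * \<psi> y)))"
      by (rule ext) (simp add: r_def h_def algebra_simps)
    ultimately have "0 = (\<integral>y. r y * \<psi> y \<partial>lborel) + \<psi> x0 * (\<integral>x. \<psi> x \<partial>lborel) + h * \<psi>' x0 * I"
      using integral_dyadic_translate_dilate_eq_0[OF j, of m] integrable integrable_moment1
      by (simp add: x0_def I_def)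
    then have "h * (\<psi>' x0 * I) = - (\<integral>y. r y * \<psi> y \<partial>lborel)"
      using integral_eq_0 by simp
    moreover have "\<bar>\<integral>y. r y * \<psi> y \<partial>lborel\<bar> \<le> 2 * R * B0 * (B2 * h\<^sup>2 * R\<^sup>2)"
      unfolding r_def by (intro abs_integral_mult_le abs_taylor2_remainder_on_support)
    ultimately have "h * \<bar>\<psi>' x0 * I\<bar> \<le> 2 * R * B0 * (B2 * h\<^sup>2 * R\<^sup>2)"
      using \<open>0 < h\<close> by (metis abs_minus_cancel abs_mult abs_of_pos)
    also have "\<dots> = h * ((2 * R * B0 * B2 * R\<^sup>2) * h)"
      by (simp add: power2_eq_square algebra_simps)
    finally have "\<bar>\<psi>' x0 * I\<bar> \<le> (2 * R * B0 * B2 * R\<^sup>2) * h"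
      using \<open>0 < h\<close> by (rule mult_left_le_imp_le)
    then show ?thesis by (simp add: h_def)
  qed
  then have "\<psi>' x0 * I = 0" by (intro eq_0_if_abs_le_div_two_pow[where J="max n 1"]) auto
  with x0 show ?thesis by (simp add: x0_def I_def)
qed

text \<open>Only \<open>f''\<close> enters because \<open>\<psi>\<close> annihilates affine functions; this is the source of the
  decay exponent \<open>\<gamma> - 2\<close> of \<open>fprim \<gamma>\<close> below.\<close>

lemma abs_integral_mult_le_deriv2_bound:
  fixes f f' f'' :: "real \<Rightarrow> real"
  assumes [measurable]: "f \<in> borel_measurable borel"
    and f': "\<And>x. x \<in> {-R..R} \<Longrightarrow> (f has_real_derivative f' x) (at x)"
    and f'': "\<And>x. x \<in> {-R..R} \<Longrightarrow> (f' has_real_derivative f'' x) (at x)"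
    and bound: "\<And>x. x \<in> {-R..R} \<Longrightarrow> \<bar>f'' x\<bar> \<le> B"
  shows "\<bar>\<integral>s. f s * \<psi> s \<partial>lborel\<bar> \<le> 2 * R ^ 3 * B0 * B"
proof -
  have "0 \<in> {-R..R}" using R_ge_1 by auto
  define q where "q s = f s - f 0 - s * f' 0" for s
  have q: "\<bar>q s\<bar> \<le> B * R\<^sup>2" if "\<bar>s\<bar> \<le> R" for s
  proof -
    have "\<bar>q s\<bar> \<le> B * s\<^sup>2"
      unfolding q_def using that \<open>0 \<in> {-R..R}\<close> by (intro abs_taylor2_remainder_le[OF f' f'' bound]) auto
    moreover have "s\<^sup>2 \<le> R\<^sup>2" using that abs_le_square_iff[of s R] R_ge_1 by auto
    moreover have "0 \<le> B" using bound[OF \<open>0 \<in> {-R..R}\<close>] by linarith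
    ultimately show ?thesis using mult_left_mono[of "s\<^sup>2" "R\<^sup>2" B] by linarith
  qed
  have "integrable lborel (\<lambda>s. q s * \<psi> s)"
    by (rule integrable_mult[OF _ q]) (unfold q_def, measurable)
  moreover have "(\<lambda>s. f s * \<psi> s) = (\<lambda>s. q s * \<psi> s + (f 0 * \<psi> s + f' 0 * (s * \<psi> s)))"
    by (rule ext) (simp add: q_def algebra_simps)
  ultimately have "(\<integral>s. f s * \<psi> s \<partial>lborel) = (\<integral>s. q s * \<psi> s \<partial>lborel)"
    using integrable integrable_moment1 integral_eq_0 integral_moment1_eq_0 by simp
  also have "\<bar>\<dots>\<bar> \<le> 2 * R * B0 * (B * R\<^sup>2)" by (rule abs_integral_mult_le[OF q])
  finally show ?thesis by (simp add: power2_eq_square power3_eq_cube mult_ac)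
qed

end

section \<open>The fractional primitive of the wavelet\<close>

context compact_wavelet
begin

text \<open>\<open>fprim (v - 1 / \<alpha>)\<close> is \<open>Psi \<alpha> \<psi> \<cdot> v\<close>.\<close>

definition fprim :: "real \<Rightarrow> real \<Rightarrow> real" where
  "fprim \<gamma> y = (\<integral>s. pospow (y - s) \<gamma> * \<psi> s \<partial>lborel)"

lemma fprim_eq_0:
  assumes "y \<le> -R"
  shows "fprim \<gamma> y = 0"
proof -
  have "(\<lambda>s. pospow (y - s) \<gamma> * \<psi> s) = (\<lambda>_. 0)"
    using support assms by (force simp: pospow_def)
  then show ?thesis by (simp add: fprim_def)
qed

lemma integrable_fprim:
  assumes "0 < \<gamma>" "\<gamma> \<le> 1"
  shows "integrable lborel (\<lambda>s. pospow (y - s) \<gamma> * \<psi> s)"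
  by (rule integrable_mult[where C="\<bar>y\<bar> + R + 1"]) (use assms R_ge_1 pospow_nonneg in \<open>auto intro!: pospow_le\<close>)

lemma abs_fprim_le:
  assumes "0 < \<gamma>" "\<gamma> \<le> 1" "y \<le> 3 * R + 2"
  shows "\<bar>fprim \<gamma> y\<bar> \<le> 2 * R * B0 * (4 * R + 2)"
  unfolding fprim_def
  by (rule abs_integral_mult_le) (use assms R_ge_1 pospow_nonneg in \<open>auto intro!: pospow_le\<close>)

lemma fprim_convolution: "fprim \<gamma> y = (\<integral>t. pospow t \<gamma> * \<psi> (y - t) \<partial>lborel)"
  unfolding fprim_def
  using lborel_integral_real_affine[of "-1" "\<lambda>s. pospow (y - s) \<gamma> * \<psi> s" y] by simp

lemma pospow_mult_le_indicator:
  assumes "0 < \<gamma>" "\<gamma> \<le> 1" "\<bar>g t\<bar> \<le> C" "4 * R + 2 < t \<Longrightarrow> g t = 0"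
  shows "\<bar>pospow t \<gamma> * g t\<bar> \<le> (4 * R + 2) * C * indicator {0..4 * R + 2} t"
proof (cases "t \<in> {0..4 * R + 2}")
  case True
  have "pospow t \<gamma> \<le> 4 * R + 2" using True assms R_ge_1 by (intro pospow_le) auto
  then have "pospow t \<gamma> * \<bar>g t\<bar> \<le> (4 * R + 2) * C"
    using assms(3) pospow_nonneg R_ge_1 by (intro mult_mono) auto
  then show ?thesis using True by (simp add: abs_mult pospow_nonneg)
qed (use assms(4) in \<open>auto simp: pospow_def\<close>)

lemma fprim_lipschitz:
  assumes "0 < \<gamma>" "\<gamma> \<le> 1" "y1 \<le> 3 * R + 2" "y2 \<le> 3 * R + 2"
  shows "\<bar>fprim \<gamma> y1 - fprim \<gamma> y2\<bar> \<le> (4 * R + 2)\<^sup>2 * B1 * \<bar>y1 - y2\<bar>"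
proof -
  have far: "\<psi> (y - t) = 0" if "y \<le> 3 * R + 2" "4 * R + 2 < t" for y t
    using that support[of "y - t"] by simp
  have lip: "\<bar>\<psi> (y1 - t) - \<psi> (y2 - t)\<bar> \<le> B1 * \<bar>y1 - y2\<bar>" for t
    using lipschitz[of "y1 - t" "y2 - t"] by simp
  have "integrable lborel (\<lambda>t. pospow t \<gamma> * \<psi> (y - t))" if "y \<le> 3 * R + 2" for y
    by (rule integrable_if_bounded_by_indicator[OF _ pospow_mult_le_indicator])
      (use assms that abs_le_B0 far in auto)
  then have "fprim \<gamma> y1 - fprim \<gamma> y2
      = (\<integral>t. pospow t \<gamma> * (\<psi> (y1 - t) - \<psi> (y2 - t)) \<partial>lborel)"
    unfolding fprim_convolution using assms by (simp add: right_diff_distrib)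
  also have "\<bar>\<dots>\<bar> \<le> (4 * R + 2) * (B1 * \<bar>y1 - y2\<bar>) * (4 * R + 2 - 0)"
    using assms far lip R_ge_1
    by (intro abs_integral_le_if_bounded_by_indicator pospow_mult_le_indicator) auto
  finally show ?thesis by (simp add: power2_eq_square mult_ac)
qed

lemma pospow_mult_eq_powr_mult:
  assumes "R < y"
  shows "pospow (y - s) \<gamma> * \<psi> s = (y - s) powr \<gamma> * \<psi> s"
  using support[of s] assms by (cases "R < \<bar>s\<bar>") (auto simp: pospow_def)

lemma abs_fprim_le_tail:
  assumes \<gamma>: "0 < \<gamma>" "\<gamma> < 1" and y: "3 * R + 2 < y"
  shows "\<bar>fprim \<gamma> y\<bar> \<le> 2 * R ^ 3 * B0 * (64 * (1 + \<bar>y\<bar>) powr (\<gamma> - 2))"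
proof -
  have "R < y" using y R_ge_1 by linarith
  then have "fprim \<gamma> y = (\<integral>s. (y - s) powr \<gamma> * \<psi> s \<partial>lborel)"
    by (simp add: fprim_def pospow_mult_eq_powr_mult)
  also have "\<bar>\<dots>\<bar> \<le> 2 * R ^ 3 * B0 * (64 * (1 + \<bar>y\<bar>) powr (\<gamma> - 2))"
  proof (rule abs_integral_mult_le_deriv2_bound[of _ "\<lambda>s. - (\<gamma> * (y - s) powr (\<gamma> - 1))"
        "\<lambda>s. \<gamma> * (\<gamma> - 1) * (y - s) powr (\<gamma> - 2)"])
    fix x :: real assume x: "x \<in> {-R..R}"
    then have "0 < y - x" using \<open>R < y\<close> by auto
    then show "((\<lambda>s. (y - s) powr \<gamma>) has_real_derivative - (\<gamma> * (y - x) powr (\<gamma> - 1))) (at x)"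
      and "((\<lambda>s. - (\<gamma> * (y - s) powr (\<gamma> - 1))) has_real_derivative
          \<gamma> * (\<gamma> - 1) * (y - x) powr (\<gamma> - 2)) (at x)"
      by (auto intro!: derivative_eq_intros simp: algebra_simps)
    have "\<bar>\<gamma> * (\<gamma> - 1) * (y - x) powr (\<gamma> - 2)\<bar> \<le> (y - x) powr (\<gamma> - 2)"
      using abs_mult_diff_one_le_one[OF \<gamma>] by (simp add: abs_mult mult_left_le_one_le)
    also have "\<dots> \<le> 4 ^ 3 * (1 + \<bar>y\<bar>) powr (\<gamma> - 2)"
      using x y \<gamma> R_ge_1 by (intro powr_le_cube_mult_powr) auto
    finally show "\<bar>\<gamma> * (\<gamma> - 1) * (y - x) powr (\<gamma> - 2)\<bar> \<le> 64 * (1 + \<bar>y\<bar>) powr (\<gamma> - 2)" by simp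
  qed measurable
  finally show ?thesis .
qed

lemma abs_fprim_diff_le_tail:
  assumes \<gamma>: "0 < \<gamma>" "\<gamma> < 1" and y: "3 * R + 1 \<le> y1" "3 * R + 1 \<le> y2" "\<bar>y1 - y2\<bar> \<le> 1"
  shows "\<bar>fprim \<gamma> y1 - fprim \<gamma> y2\<bar> \<le> 2 * R ^ 3 * B0 * (432 * \<bar>y1 - y2\<bar> * (1 + \<bar>y1\<bar>) powr (\<gamma> - 2))"
proof -
  define m where "m = min y1 y2"
  have "3 * R + 1 \<le> m" "1 \<le> m" using y R_ge_1 by (auto simp: m_def)
  have "R < y1" "R < y2" using y R_ge_1 by linarith+
  then have "fprim \<gamma> y1 - fprim \<gamma> y2 = (\<integral>s. ((y1 - s) powr \<gamma> - (y2 - s) powr \<gamma>) * \<psi> s \<partial>lborel)"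
    using integrable_fprim[of \<gamma> y1] integrable_fprim[of \<gamma> y2] \<gamma>
    by (simp add: fprim_def pospow_mult_eq_powr_mult left_diff_distrib)
  also have "\<bar>\<dots>\<bar> \<le> 2 * R ^ 3 * B0 * (432 * \<bar>y1 - y2\<bar> * (1 + \<bar>y1\<bar>) powr (\<gamma> - 2))"
  proof (rule abs_integral_mult_le_deriv2_bound[of _
        "\<lambda>s. - (\<gamma> * (y1 - s) powr (\<gamma> - 1)) + \<gamma> * (y2 - s) powr (\<gamma> - 1)"
        "\<lambda>s. \<gamma> * (\<gamma> - 1) * ((y1 - s) powr (\<gamma> - 2) - (y2 - s) powr (\<gamma> - 2))"])
    fix x :: real assume x: "x \<in> {-R..R}"
    then have "0 < y1 - x" "0 < y2 - x" using \<open>R < y1\<close> \<open>R < y2\<close> by auto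
    then show "((\<lambda>s. (y1 - s) powr \<gamma> - (y2 - s) powr \<gamma>) has_real_derivative
        - (\<gamma> * (y1 - x) powr (\<gamma> - 1)) + \<gamma> * (y2 - x) powr (\<gamma> - 1)) (at x)"
      and "((\<lambda>s. - (\<gamma> * (y1 - s) powr (\<gamma> - 1)) + \<gamma> * (y2 - s) powr (\<gamma> - 1)) has_real_derivative
        \<gamma> * (\<gamma> - 1) * ((y1 - x) powr (\<gamma> - 2) - (y2 - x) powr (\<gamma> - 2))) (at x)"
      by (auto intro!: derivative_eq_intros simp: algebra_simps)
    have "m / 2 \<le> y1 - x" "m / 2 \<le> y2 - x" using x \<open>3 * R + 1 \<le> m\<close> by (auto simp: m_def)
    then have "\<bar>\<gamma> * (\<gamma> - 1) * ((y1 - x) powr (\<gamma> - 2) - (y2 - x) powr (\<gamma> - 2))\<bar>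
        \<le> 16 * \<bar>y1 - y2\<bar> * m powr (\<gamma> - 3)"
      using abs_powr_second_diff_le[OF \<gamma>, of m "y1 - x" "y2 - x"] \<open>1 \<le> m\<close> by simp
    also have "\<dots> \<le> 16 * \<bar>y1 - y2\<bar> * (3 ^ 3 * (1 + \<bar>y1\<bar>) powr (\<gamma> - 2))"
    proof (intro mult_left_mono)
      have "m powr (\<gamma> - 3) \<le> m powr (\<gamma> - 2)" using \<open>1 \<le> m\<close> by (intro powr_mono) auto
      also have "\<dots> \<le> 3 ^ 3 * (1 + \<bar>y1\<bar>) powr (\<gamma> - 2)"
        using y \<open>3 * R + 1 \<le> m\<close> R_ge_1 \<gamma> by (intro powr_le_cube_mult_powr) (auto simp: m_def)
      finally show "m powr (\<gamma> - 3) \<le> 3 ^ 3 * (1 + \<bar>y1\<bar>) powr (\<gamma> - 2)" .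
    qed simp
    finally show "\<bar>\<gamma> * (\<gamma> - 1) * ((y1 - x) powr (\<gamma> - 2) - (y2 - x) powr (\<gamma> - 2))\<bar>
        \<le> 432 * \<bar>y1 - y2\<bar> * (1 + \<bar>y1\<bar>) powr (\<gamma> - 2)" by simp
  qed measurable
  finally show ?thesis .
qed

lemma abs_fprim_le_decay:
  obtains A where "0 \<le> A" "\<And>\<gamma> y. 0 < \<gamma> \<Longrightarrow> \<gamma> < 1 \<Longrightarrow> \<bar>fprim \<gamma> y\<bar> \<le> A * (1 + \<bar>y\<bar>) powr (\<gamma> - 2)"
proof -
  define C where "C = 2 * R * B0 * (4 * R + 2)"
  define K where "K = 2 * R ^ 3 * B0"
  define A where "A = C * (3 * R + 3) ^ 2 + 64 * K"
  have "0 \<le> C" "0 \<le> K" using B0_nonneg R_ge_1 by (simp_all add: C_def K_def)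
  then have "0 \<le> A" by (simp add: A_def)
  moreover have "\<bar>fprim \<gamma> y\<bar> \<le> A * (1 + \<bar>y\<bar>) powr (\<gamma> - 2)" if \<gamma>: "0 < \<gamma>" "\<gamma> < 1" for \<gamma> y
  proof -
    consider "y \<le> -R" | "-R < y" "y \<le> 3 * R + 2" | "3 * R + 2 < y" by linarith
    then show ?thesis
    proof cases
      case 1
      then show ?thesis using fprim_eq_0 \<open>0 \<le> A\<close> by simp
    next
      case 2
      have "\<bar>fprim \<gamma> y\<bar> \<le> C * (3 * R + 3) ^ 2 * (1 + \<bar>y\<bar>) powr (\<gamma> - 2)"
        using abs_fprim_le[of \<gamma> y] 2 \<gamma> R_ge_1 \<open>0 \<le> C\<close>
        by (intro le_mult_square_mult_powr) (auto simp: C_def)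
      also have "\<dots> \<le> A * (1 + \<bar>y\<bar>) powr (\<gamma> - 2)"
        unfolding A_def using \<open>0 \<le> K\<close> by (intro mult_right_mono) auto
      finally show ?thesis .
    next
      case 3
      then show ?thesis
        using abs_fprim_le_tail[OF \<gamma> 3] \<open>0 \<le> C\<close> unfolding A_def K_def
        by (simp add: algebra_simps add_increasing)
    qed
  qed
  ultimately show ?thesis using that by blast
qed

lemma abs_fprim_diff_le_decay:
  obtains A where "0 \<le> A" "\<And>\<gamma> y1 y2. 0 < \<gamma> \<Longrightarrow> \<gamma> < 1 \<Longrightarrow> \<bar>y1 - y2\<bar> \<le> 1 \<Longrightarrow>
    \<bar>fprim \<gamma> y1 - fprim \<gamma> y2\<bar> \<le> A * \<bar>y1 - y2\<bar> * (1 + \<bar>y1\<bar>) powr (\<gamma> - 2)"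
proof -
  define L where "L = (4 * R + 2)\<^sup>2 * B1"
  define K where "K = 2 * R ^ 3 * B0"
  define A where "A = L * (3 * R + 3) ^ 2 + 432 * K"
  have "0 \<le> L" "0 \<le> K" using B0_nonneg B1_nonneg R_ge_1 by (simp_all add: L_def K_def)
  then have "0 \<le> A" by (simp add: A_def)
  moreover have "\<bar>fprim \<gamma> y1 - fprim \<gamma> y2\<bar> \<le> A * \<bar>y1 - y2\<bar> * (1 + \<bar>y1\<bar>) powr (\<gamma> - 2)"
    if \<gamma>: "0 < \<gamma>" "\<gamma> < 1" and d: "\<bar>y1 - y2\<bar> \<le> 1" for \<gamma> y1 y2
  proof -
    consider "y1 < -R - 1" | "-R - 1 \<le> y1" "max y1 y2 \<le> 3 * R + 2" | "3 * R + 2 < max y1 y2"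
      by linarith
    then show ?thesis
    proof cases
      case 1
      then show ?thesis using d fprim_eq_0[of y1] fprim_eq_0[of y2] \<open>0 \<le> A\<close> by simp
    next
      case 2
      have "\<bar>fprim \<gamma> y1 - fprim \<gamma> y2\<bar> \<le> (L * \<bar>y1 - y2\<bar>) * (3 * R + 3) ^ 2 * (1 + \<bar>y1\<bar>) powr (\<gamma> - 2)"
        using fprim_lipschitz[of \<gamma> y1 y2] 2 \<gamma> R_ge_1 \<open>0 \<le> L\<close>
        by (intro le_mult_square_mult_powr) (auto simp: L_def)
      also have "\<dots> \<le> A * \<bar>y1 - y2\<bar> * (1 + \<bar>y1\<bar>) powr (\<gamma> - 2)"
        unfolding A_def using \<open>0 \<le> K\<close> by (intro mult_right_mono) (auto simp: algebra_simps)
      finally show ?thesis .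
    next
      case 3
      then have "3 * R + 1 \<le> y1" "3 * R + 1 \<le> y2" using d by auto
      then show ?thesis
        using abs_fprim_diff_le_tail[OF \<gamma> _ _ d] \<open>0 \<le> L\<close> unfolding A_def K_def
        by (simp add: algebra_simps add_increasing)
    qed
  qed
  ultimately show ?thesis using that by blast
qed

lemma abs_fprim_diff_le:
  obtains A where "0 \<le> A" "\<And>\<gamma> y1 y2. 0 < \<gamma> \<Longrightarrow> \<gamma> < 1 \<Longrightarrow>
    \<bar>fprim \<gamma> y1 - fprim \<gamma> y2\<bar>
      \<le> A * min 1 \<bar>y1 - y2\<bar> * ((1 + \<bar>y1\<bar>) powr (\<gamma> - 2) + (1 + \<bar>y2\<bar>) powr (\<gamma> - 2))"
proof -
  obtain A0 where A0: "0 \<le> A0" "\<And>\<gamma> y. 0 < \<gamma> \<Longrightarrow> \<gamma> < 1 \<Longrightarrow> \<bar>fprim \<gamma> y\<bar> \<le> A0 * (1 + \<bar>y\<bar>) powr (\<gamma> - 2)"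
    using abs_fprim_le_decay by blast
  obtain A1 where A1: "0 \<le> A1" "\<And>\<gamma> y1 y2. 0 < \<gamma> \<Longrightarrow> \<gamma> < 1 \<Longrightarrow> \<bar>y1 - y2\<bar> \<le> 1 \<Longrightarrow>
      \<bar>fprim \<gamma> y1 - fprim \<gamma> y2\<bar> \<le> A1 * \<bar>y1 - y2\<bar> * (1 + \<bar>y1\<bar>) powr (\<gamma> - 2)"
    using abs_fprim_diff_le_decay by blast
  have "\<bar>fprim \<gamma> y1 - fprim \<gamma> y2\<bar>
      \<le> (A0 + A1) * min 1 \<bar>y1 - y2\<bar> * ((1 + \<bar>y1\<bar>) powr (\<gamma> - 2) + (1 + \<bar>y2\<bar>) powr (\<gamma> - 2))"
    if \<gamma>: "0 < \<gamma>" "\<gamma> < 1" for \<gamma> y1 y2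
  proof (cases "\<bar>y1 - y2\<bar> \<le> 1")
    case True
    have "\<bar>fprim \<gamma> y1 - fprim \<gamma> y2\<bar> \<le> A1 * \<bar>y1 - y2\<bar> * (1 + \<bar>y1\<bar>) powr (\<gamma> - 2)"
      by (rule A1(2)[OF \<gamma> True])
    also have "\<dots> \<le> (A0 + A1) * \<bar>y1 - y2\<bar> * ((1 + \<bar>y1\<bar>) powr (\<gamma> - 2) + (1 + \<bar>y2\<bar>) powr (\<gamma> - 2))"
      using A0(1) A1(1) by (intro mult_mono) auto
    finally show ?thesis using True by simp
  next
    case False
    have "\<bar>fprim \<gamma> y1 - fprim \<gamma> y2\<bar> \<le> A0 * (1 + \<bar>y1\<bar>) powr (\<gamma> - 2) + A0 * (1 + \<bar>y2\<bar>) powr (\<gamma> - 2)"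
      using A0(2)[OF \<gamma>, of y1] A0(2)[OF \<gamma>, of y2] by linarith
    also have "\<dots> \<le> (A0 + A1) * ((1 + \<bar>y1\<bar>) powr (\<gamma> - 2) + (1 + \<bar>y2\<bar>) powr (\<gamma> - 2))"
      using A1(1) by (simp add: algebra_simps)
    finally show ?thesis using False by simp
  qed
  with A0(1) A1(1) show ?thesis using that[of "A0 + A1"] by simp
qed

end

section \<open>The wavelet series\<close>

text \<open>The coefficients at a fixed \<open>\<omega> \<in> \<Omega>0 \<inter> \<Omega>1\<close>, with \<open>\<eta> = \<delta>\<close> and \<open>l = 2 * M\<close>.\<close>

locale wavelet_coefficients =
  fixes \<epsilon> :: "int \<Rightarrow> int \<Rightarrow> real" and \<alpha> \<delta> M C C' :: real
  assumes alpha: "1 < \<alpha>"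
    and delta: "0 < \<delta>" "1 / \<alpha> + 2 * \<delta> < 1"
    and M: "0 < M"
    and C: "0 \<le> C" "0 \<le> C'"
    and growth: "\<And>j k. \<bar>\<epsilon> j k\<bar> \<le> C * (3 + \<bar>real_of_int j\<bar>) powr (1 / \<alpha> + \<delta>) * (3 + \<bar>real_of_int k\<bar>) powr (1 / \<alpha> + \<delta>)"
    and growth_local: "\<And>j k. 0 \<le> j \<Longrightarrow> \<bar>real_of_int k\<bar> * 2 powr (- real_of_int j) \<le> 2 * M \<Longrightarrow>
      \<bar>\<epsilon> j k\<bar> \<le> C' * 2 powr (real_of_int j / \<alpha>)"
begin

definition scale_weight :: "int \<Rightarrow> real" where
  "scale_weight j = (if j < 0 then 2 powr (- real_of_int j * \<delta>) else 2 powr (real_of_int j / \<alpha>))"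

definition majorant :: "real \<Rightarrow> real \<Rightarrow> real \<Rightarrow> int \<times> int \<Rightarrow> real" where
  "majorant u1 u2 v = (\<lambda>(j, k). 2 powr (- real_of_int j * v) * \<bar>\<epsilon> j k\<bar>
     * min 1 \<bar>2 powr real_of_int j * u1 - 2 powr real_of_int j * u2\<bar>
     * ((1 + \<bar>2 powr real_of_int j * u1 - real_of_int k\<bar>) powr (v - 1 / \<alpha> - 2)
       + (1 + \<bar>2 powr real_of_int j * u2 - real_of_int k\<bar>) powr (v - 1 / \<alpha> - 2)))"

lemma growth_exponent: "0 \<le> 1 / \<alpha> + \<delta>" "1 / \<alpha> + \<delta> \<le> 1"
  using alpha delta by auto

lemma scale_weight_nonneg: "0 \<le> scale_weight j"
  by (simp add: scale_weight_def)

lemma three_plus_powr_le_two_powr: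
  assumes "0 < c"
  shows "(3 + \<bar>real_of_int j\<bar>) powr (1 / \<alpha> + \<delta>) \<le> (3 + 1 / (c * ln 2)) * 2 powr (c * \<bar>real_of_int j\<bar>)"
  using growth_exponent powr_mono[of "1 / \<alpha> + \<delta>" 1 "3 + \<bar>real_of_int j\<bar>"]
    three_plus_le_two_powr[OF assms, of "\<bar>real_of_int j\<bar>"] by auto

lemma abs_mult_weight_le_coarse:
  fixes k :: int
  assumes j: "j < 0" and u: "\<bar>u\<bar> \<le> M" and e: "1 / \<alpha> + \<delta> + e \<le> - (1 + \<delta>)"
  defines "w \<equiv> 1 + \<bar>2 powr real_of_int j * u - real_of_int k\<bar>"
  shows "\<bar>\<epsilon> j k\<bar> * w powr e
    \<le> C * (3 + M) powr (1 / \<alpha> + \<delta>) * (3 + 1 / (\<delta> * ln 2)) * scale_weight j * w powr (- (1 + \<delta>))"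
proof -
  have "2 powr real_of_int j * \<bar>u\<bar> \<le> \<bar>u\<bar>"
    using j powr_mono[of "real_of_int j" 0 2] by (intro mult_left_le_one_le) auto
  then have "\<bar>2 powr real_of_int j * u\<bar> \<le> M" using u by (simp add: abs_mult)
  from weighted_term_le[where s="1 + \<delta>", OF growth three_plus_abs_le_near[OF this]]
  have "\<bar>\<epsilon> j k\<bar> * w powr e \<le> C * (3 + \<bar>real_of_int j\<bar>) powr (1 / \<alpha> + \<delta>) * (3 + M) powr (1 / \<alpha> + \<delta>) * w powr (- (1 + \<delta>))"
    using C growth_exponent e by (simp add: w_def)
  also have "\<dots> \<le> C * ((3 + 1 / (\<delta> * ln 2)) * scale_weight j) * (3 + M) powr (1 / \<alpha> + \<delta>) * w powr (- (1 + \<delta>))"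
    using three_plus_powr_le_two_powr[of \<delta> j] j delta C
    by (intro mult_right_mono mult_left_mono) (auto simp: scale_weight_def mult.commute)
  finally show ?thesis by (simp add: mult_ac)
qed

lemma abs_mult_weight_le_fine:
  fixes k :: int
  assumes j: "0 \<le> j" and u: "\<bar>u\<bar> \<le> M" and e: "e \<le> - (1 + \<delta>)" "1 / \<alpha> + \<delta> + e \<le> - (1 + \<delta>)"
  defines "w \<equiv> 1 + \<bar>2 powr real_of_int j * u - real_of_int k\<bar>"
  shows "\<bar>\<epsilon> j k\<bar> * w powr e \<le> (C' + 3 * C * (3 + 1 / ((1 / \<alpha>) * ln 2))) * scale_weight j * w powr (- (1 + \<delta>))"
proof (cases "\<bar>real_of_int k\<bar> * 2 powr (- real_of_int j) \<le> 2 * M")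
  case True
  have "\<bar>\<epsilon> j k\<bar> * w powr e \<le> C' * scale_weight j * w powr (- (1 + \<delta>))"
    using growth_local[OF j True] e j by (intro mult_mono powr_mono) (auto simp: w_def scale_weight_def)
  also have "\<dots> \<le> (C' + 3 * C * (3 + 1 / ((1 / \<alpha>) * ln 2))) * scale_weight j * w powr (- (1 + \<delta>))"
    using C alpha scale_weight_nonneg by (intro mult_right_mono) auto
  finally show ?thesis .
next
  case False
  have "\<bar>2 powr real_of_int j * u\<bar> \<le> 2 powr real_of_int j * M" using u by (simp add: abs_mult mult_left_mono)
  moreover have "2 * M * 2 powr real_of_int j < \<bar>real_of_int k\<bar>"
    using False by (simp add: powr_minus field_simps)
  ultimately have "2 * \<bar>2 powr real_of_int j * u\<bar> < \<bar>real_of_int k\<bar>" by (simp add: mult_ac)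
  from weighted_term_le[where s="1 + \<delta>", OF growth three_plus_abs_le_far[OF this]]
  have "\<bar>\<epsilon> j k\<bar> * w powr e \<le> C * (3 + \<bar>real_of_int j\<bar>) powr (1 / \<alpha> + \<delta>) * 3 powr (1 / \<alpha> + \<delta>) * w powr (- (1 + \<delta>))"
    using C growth_exponent e by (simp add: w_def)
  also have "\<dots> \<le> C * ((3 + 1 / ((1 / \<alpha>) * ln 2)) * scale_weight j) * 3 * w powr (- (1 + \<delta>))"
    using three_plus_powr_le_two_powr[of "1 / \<alpha>" j] powr_mono[of "1 / \<alpha> + \<delta>" 1 3] j alpha C growth_exponent
    by (intro mult_right_mono mult_mono) (auto simp: scale_weight_def)
  also have "\<dots> \<le> (C' + 3 * C * (3 + 1 / ((1 / \<alpha>) * ln 2))) * scale_weight j * w powr (- (1 + \<delta>))"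
    using C alpha scale_weight_nonneg by (intro mult_right_mono) (auto simp: algebra_simps)
  finally show ?thesis .
qed

lemma row_sum_le:
  obtains K where "0 \<le> K" "\<And>j u S e. \<bar>u\<bar> \<le> M \<Longrightarrow> finite S \<Longrightarrow> e \<le> - (1 + \<delta>) \<Longrightarrow> 1 / \<alpha> + \<delta> + e \<le> - (1 + \<delta>) \<Longrightarrow>
    (\<Sum>k\<in>S. \<bar>\<epsilon> j k\<bar> * (1 + \<bar>2 powr real_of_int j * u - real_of_int k\<bar>) powr e) \<le> K * scale_weight j"
proof -
  define Kc where "Kc = C * (3 + M) powr (1 / \<alpha> + \<delta>) * (3 + 1 / (\<delta> * ln 2))"
  define Kf where "Kf = C' + 3 * C * (3 + 1 / ((1 / \<alpha>) * ln 2))"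
  have "0 \<le> Kc" "0 \<le> Kf" using C alpha delta by (simp_all add: Kc_def Kf_def)
  define K where "K = Kc + Kf"
  have "0 \<le> K" "Kc \<le> K" "Kf \<le> K" using \<open>0 \<le> Kc\<close> \<open>0 \<le> Kf\<close> by (simp_all add: K_def)
  have pointwise: "\<bar>\<epsilon> j k\<bar> * (1 + \<bar>2 powr real_of_int j * u - real_of_int k\<bar>) powr e
      \<le> K * scale_weight j * (1 + \<bar>2 powr real_of_int j * u - real_of_int k\<bar>) powr (- (1 + \<delta>))"
    if "\<bar>u\<bar> \<le> M" "e \<le> - (1 + \<delta>)" "1 / \<alpha> + \<delta> + e \<le> - (1 + \<delta>)" for j k u e
  proof -
    have "Kc * scale_weight j \<le> K * scale_weight j" "Kf * scale_weight j \<le> K * scale_weight j"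
      using \<open>Kc \<le> K\<close> \<open>Kf \<le> K\<close> scale_weight_nonneg by (simp_all add: mult_right_mono)
    then show ?thesis
      using abs_mult_weight_le_coarse[of j u e k] abs_mult_weight_le_fine[of j u e k] that
      unfolding Kc_def[symmetric] Kf_def[symmetric]
      by (cases "j < 0") (auto elim!: order_trans intro!: mult_right_mono)
  qed
  obtain Z where Z: "0 \<le> Z" "\<And>y S. finite S \<Longrightarrow> (\<Sum>k\<in>S. (1 + \<bar>y - real_of_int k\<bar>) powr (- (1 + \<delta>))) \<le> Z"
    using sum_lattice_powr_bounded[of "1 + \<delta>"] delta by auto
  have "(\<Sum>k\<in>S. \<bar>\<epsilon> j k\<bar> * (1 + \<bar>2 powr real_of_int j * u - real_of_int k\<bar>) powr e) \<le> K * Z * scale_weight j"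
    if "\<bar>u\<bar> \<le> M" "finite S" "e \<le> - (1 + \<delta>)" "1 / \<alpha> + \<delta> + e \<le> - (1 + \<delta>)" for j u S e
  proof -
    have "(\<Sum>k\<in>S. \<bar>\<epsilon> j k\<bar> * (1 + \<bar>2 powr real_of_int j * u - real_of_int k\<bar>) powr e)
        \<le> K * scale_weight j * (\<Sum>k\<in>S. (1 + \<bar>2 powr real_of_int j * u - real_of_int k\<bar>) powr (- (1 + \<delta>)))"
      unfolding sum_distrib_left using pointwise that by (intro sum_mono) blast
    also have "\<dots> \<le> K * scale_weight j * Z"
      using Z(2)[OF \<open>finite S\<close>] \<open>0 \<le> K\<close> scale_weight_nonneg by (intro mult_left_mono) auto
    finally show ?thesis by (simp add: mult_ac)
  qed
  with \<open>0 \<le> K\<close> Z(1) show ?thesis using that[of "K * Z"] by simp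
qed

lemma sum_scales_le:
  assumes "1 / \<alpha> < a"
  obtains Q where "0 \<le> Q" "\<And>J v h. finite J \<Longrightarrow> a \<le> v \<Longrightarrow> v \<le> 1 - 2 * \<delta> \<Longrightarrow> 0 < h \<Longrightarrow> h \<le> 2 * M \<Longrightarrow>
    (\<Sum>j\<in>J. 2 powr (- real_of_int j * v) * min 1 (2 powr real_of_int j * h) * scale_weight j)
      \<le> Q * h powr (v - 1 / \<alpha>)"
proof -
  obtain Q0 where Q0: "0 \<le> Q0" "\<And>F. finite F \<Longrightarrow> (\<And>j. j \<in> F \<Longrightarrow> j \<le> 0) \<Longrightarrow>
      (\<Sum>j\<in>F. 2 powr (real_of_int j * \<delta>)) \<le> Q0"
    using sum_two_powr_nonpos_bounded delta by blast
  have "0 < 1 / \<alpha>" using alpha by simp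
  then have "0 < a - 1 / \<alpha>" "1 - 2 * \<delta> - 1 / \<alpha> < 1" using assms delta by linarith+
  then obtain Q1 where Q1: "0 \<le> Q1" "\<And>\<gamma> h F. a - 1 / \<alpha> \<le> \<gamma> \<Longrightarrow> \<gamma> \<le> 1 - 2 * \<delta> - 1 / \<alpha> \<Longrightarrow> 0 < h \<Longrightarrow> finite F \<Longrightarrow>
      (\<Sum>j\<in>F. 2 powr (- real_of_int j * \<gamma>) * min 1 (2 powr real_of_int j * h)) \<le> Q1 * h powr \<gamma>"
    using sum_two_powr_mult_min_bounded by blast
  define f where "f v h j = 2 powr (- real_of_int j * v) * min 1 (2 powr real_of_int j * h) * scale_weight j"
    for v h :: real and j :: int
  have "sum (f v h) J \<le> (Q0 * max 1 (2 * M) + Q1) * h powr (v - 1 / \<alpha>)"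
    if J: "finite J" and v: "a \<le> v" "v \<le> 1 - 2 * \<delta>" and h: "0 < h" "h \<le> 2 * M" for J v h
  proof -
    have "f v h j \<le> h * 2 powr (real_of_int j * \<delta>)" if "j < 0" for j
    proof -
      have "f v h j \<le> 2 powr (- real_of_int j * v) * (2 powr real_of_int j * h) * 2 powr (- real_of_int j * \<delta>)"
        using that by (simp add: f_def scale_weight_def mult_right_mono mult_left_mono)
      also have "\<dots> = h * 2 powr (real_of_int j * (1 - v - \<delta>))"
        by (simp add: powr_add[symmetric] algebra_simps)
      also have "\<dots> \<le> h * 2 powr (real_of_int j * \<delta>)"
        using that v h by (intro mult_left_mono powr_mono mult_left_mono_neg) auto
      finally show ?thesis .
    qed
    then have "sum (f v h) (J \<inter> {j. j < 0}) \<le> h * Q0"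
      using sum_mono[of "J \<inter> {j. j < 0}" "f v h" "\<lambda>j. h * 2 powr (real_of_int j * \<delta>)"]
        mult_left_mono[OF Q0(2), of "J \<inter> {j. j < 0}" h] J h
      by (simp add: sum_distrib_left)
    also have "\<dots> \<le> (max 1 (2 * M) * h powr (v - 1 / \<alpha>)) * Q0"
      using le_max_mult_powr[OF h, of "v - 1 / \<alpha>"] \<open>0 < 1 / \<alpha>\<close> assms v delta Q0(1)
      by (intro mult_right_mono) (auto simp: mult.commute)
    finally have coarse: "sum (f v h) (J \<inter> {j. j < 0}) \<le> Q0 * max 1 (2 * M) * h powr (v - 1 / \<alpha>)"
      by (simp add: mult_ac)
    have "f v h j = 2 powr (- real_of_int j * (v - 1 / \<alpha>)) * min 1 (2 powr real_of_int j * h)"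
      if "\<not> j < 0" for j
      using that by (simp add: f_def scale_weight_def powr_add[symmetric] algebra_simps)
    then have "sum (f v h) (J - {j. j < 0}) \<le> Q1 * h powr (v - 1 / \<alpha>)"
      using Q1(2)[of "v - 1 / \<alpha>" h "J - {j. j < 0}"] J v h by simp
    with coarse show ?thesis using sum.Int_Diff[OF J, of "f v h" "{j. j < 0}"] by (simp add: algebra_simps)
  qed
  with Q0(1) Q1(1) show ?thesis using that[of "Q0 * max 1 (2 * M) + Q1"] by (simp add: f_def)
qed

lemma majorant_nonneg: "0 \<le> majorant u1 u2 v x"
  by (simp add: majorant_def case_prod_beta)

lemma sum_majorant_le:
  assumes "1 / \<alpha> < a"
  obtains K where "0 \<le> K" "\<And>F u1 u2 v. finite F \<Longrightarrow> \<bar>u1\<bar> \<le> M \<Longrightarrow> \<bar>u2\<bar> \<le> M \<Longrightarrow> a \<le> v \<Longrightarrow> v \<le> 1 - 2 * \<delta> \<Longrightarrow>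
    (\<Sum>x\<in>F. majorant u1 u2 v x) \<le> K * \<bar>u1 - u2\<bar> powr (v - 1 / \<alpha>)"
proof -
  obtain Kr where Kr: "0 \<le> Kr" "\<And>j u S e. \<bar>u\<bar> \<le> M \<Longrightarrow> finite S \<Longrightarrow> e \<le> - (1 + \<delta>) \<Longrightarrow> 1 / \<alpha> + \<delta> + e \<le> - (1 + \<delta>) \<Longrightarrow>
    (\<Sum>k\<in>S. \<bar>\<epsilon> j k\<bar> * (1 + \<bar>2 powr real_of_int j * u - real_of_int k\<bar>) powr e) \<le> Kr * scale_weight j"
    using row_sum_le by blast
  obtain Q where Q: "0 \<le> Q" "\<And>J v h. finite J \<Longrightarrow> a \<le> v \<Longrightarrow> v \<le> 1 - 2 * \<delta> \<Longrightarrow> 0 < h \<Longrightarrow> h \<le> 2 * M \<Longrightarrow>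
    (\<Sum>j\<in>J. 2 powr (- real_of_int j * v) * min 1 (2 powr real_of_int j * h) * scale_weight j)
      \<le> Q * h powr (v - 1 / \<alpha>)"
    using sum_scales_le[OF assms] by blast
  have "(\<Sum>x\<in>F. majorant u1 u2 v x) \<le> 2 * Kr * Q * \<bar>u1 - u2\<bar> powr (v - 1 / \<alpha>)"
    if F: "finite F" and u: "\<bar>u1\<bar> \<le> M" "\<bar>u2\<bar> \<le> M" and v: "a \<le> v" "v \<le> 1 - 2 * \<delta>" for F u1 u2 v
  proof (cases "u1 = u2")
    case False
    define h where "h = \<bar>u1 - u2\<bar>"
    have h: "0 < h" "h \<le> 2 * M" using u False by (auto simp: h_def)
    have "0 < 1 / \<alpha>" using alpha by simp
    then have e: "v - 1 / \<alpha> - 2 \<le> - (1 + \<delta>)" "1 / \<alpha> + \<delta> + (v - 1 / \<alpha> - 2) \<le> - (1 + \<delta>)"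
      using v delta by linarith+
    have row: "(\<Sum>k\<in>snd ` F. majorant u1 u2 v (j, k))
        \<le> 2 * Kr * (2 powr (- real_of_int j * v) * min 1 (2 powr real_of_int j * h) * scale_weight j)" for j
    proof -
      define c where "c = 2 powr (- real_of_int j * v) * min 1 (2 powr real_of_int j * h)"
      have "0 \<le> c" using h by (simp add: c_def)
      have "min 1 \<bar>2 powr real_of_int j * u1 - 2 powr real_of_int j * u2\<bar> = min 1 (2 powr real_of_int j * h)"
        by (simp add: h_def right_diff_distrib[symmetric] abs_mult)
      then have "(\<Sum>k\<in>snd ` F. majorant u1 u2 v (j, k))
          = c * (\<Sum>k\<in>snd ` F. \<bar>\<epsilon> j k\<bar> * (1 + \<bar>2 powr real_of_int j * u1 - real_of_int k\<bar>) powr (v - 1 / \<alpha> - 2))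
            + c * (\<Sum>k\<in>snd ` F. \<bar>\<epsilon> j k\<bar> * (1 + \<bar>2 powr real_of_int j * u2 - real_of_int k\<bar>) powr (v - 1 / \<alpha> - 2))"
        by (simp add: majorant_def c_def sum_distrib_left sum.distrib[symmetric] algebra_simps)
      also have "\<dots> \<le> c * (Kr * scale_weight j) + c * (Kr * scale_weight j)"
        using Kr(2)[OF _ _ e] u F \<open>0 \<le> c\<close> by (intro add_mono mult_left_mono) auto
      finally show ?thesis by (simp add: c_def algebra_simps)
    qed
    have "(\<Sum>x\<in>F. majorant u1 u2 v x) \<le> (\<Sum>j\<in>fst ` F. \<Sum>k\<in>snd ` F. majorant u1 u2 v (j, k))"
      using F majorant_nonneg by (rule sum_le_sum_rows)
    also have "\<dots> \<le> 2 * Kr * (\<Sum>j\<in>fst ` F. 2 powr (- real_of_int j * v) * min 1 (2 powr real_of_int j * h) * scale_weight j)"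
      unfolding sum_distrib_left using row by (rule sum_mono)
    also have "\<dots> \<le> 2 * Kr * (Q * h powr (v - 1 / \<alpha>))"
      using Q(2)[OF _ v h] F Kr(1) by (intro mult_left_mono) auto
    finally show ?thesis by (simp add: h_def mult_ac)
  qed (simp add: majorant_def case_prod_beta)
  with Kr(1) Q(1) show ?thesis using that[of "2 * Kr * Q"] by simp
qed

end

locale wavelet_series = compact_wavelet \<psi> \<psi>' \<psi>'' R + wavelet_coefficients \<epsilon> \<alpha> \<delta> M C C'
  for \<psi> \<psi>' \<psi>'' R \<epsilon> \<alpha> \<delta> M C C'
begin

definition increment :: "real \<Rightarrow> real \<Rightarrow> real \<Rightarrow> int \<times> int \<Rightarrow> real" where
  "increment u1 u2 v = (\<lambda>(j, k). 2 powr (- real_of_int j * v) * \<epsilon> j k *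
     (Psi \<alpha> \<psi> (2 powr real_of_int j * u1 - real_of_int k) v - Psi \<alpha> \<psi> (2 powr real_of_int j * u2 - real_of_int k) v))"

lemma abs_increment_le:
  obtains A where "0 \<le> A"
    "\<And>u1 u2 v x. 1 / \<alpha> < v \<Longrightarrow> v < 1 + 1 / \<alpha> \<Longrightarrow> \<bar>increment u1 u2 v x\<bar> \<le> A * majorant u1 u2 v x"
proof -
  obtain A where A: "0 \<le> A" "\<And>\<gamma> y1 y2. 0 < \<gamma> \<Longrightarrow> \<gamma> < 1 \<Longrightarrow> \<bar>fprim \<gamma> y1 - fprim \<gamma> y2\<bar>
      \<le> A * min 1 \<bar>y1 - y2\<bar> * ((1 + \<bar>y1\<bar>) powr (\<gamma> - 2) + (1 + \<bar>y2\<bar>) powr (\<gamma> - 2))"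
    using abs_fprim_diff_le by blast
  have Psi: "Psi \<alpha> \<psi> y v = fprim (v - 1 / \<alpha>) y" for y v
    by (simp add: Psi_def fprim_def)
  have "\<bar>increment u1 u2 v x\<bar> \<le> A * majorant u1 u2 v x"
    if v: "1 / \<alpha> < v" "v < 1 + 1 / \<alpha>" for u1 u2 v x
  proof -
    obtain j k where x: "x = (j, k)" by (cases x)
    define y1 y2 where "y1 = 2 powr real_of_int j * u1 - real_of_int k" and "y2 = 2 powr real_of_int j * u2 - real_of_int k"
    have "\<bar>fprim (v - 1 / \<alpha>) y1 - fprim (v - 1 / \<alpha>) y2\<bar>
        \<le> A * min 1 \<bar>y1 - y2\<bar> * ((1 + \<bar>y1\<bar>) powr (v - 1 / \<alpha> - 2) + (1 + \<bar>y2\<bar>) powr (v - 1 / \<alpha> - 2))"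
      using A(2) v by simp
    from mult_left_mono[OF this, of "2 powr (- real_of_int j * v) * \<bar>\<epsilon> j k\<bar>"] show ?thesis
      by (simp add: x increment_def majorant_def Psi abs_mult y1_def y2_def mult_ac)
  qed
  with A(1) show ?thesis by (rule that)
qed

lemma sum_abs_increment_le:
  assumes "1 / \<alpha> < a"
  obtains K where "\<And>F u1 u2 v. finite F \<Longrightarrow> \<bar>u1\<bar> \<le> M \<Longrightarrow> \<bar>u2\<bar> \<le> M \<Longrightarrow> a \<le> v \<Longrightarrow> v \<le> 1 - 2 * \<delta> \<Longrightarrow>
    (\<Sum>x\<in>F. \<bar>increment u1 u2 v x\<bar>) \<le> K * \<bar>u1 - u2\<bar> powr (v - 1 / \<alpha>)"
proof -
  obtain A where A: "0 \<le> A"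
    "\<And>u1 u2 v x. 1 / \<alpha> < v \<Longrightarrow> v < 1 + 1 / \<alpha> \<Longrightarrow> \<bar>increment u1 u2 v x\<bar> \<le> A * majorant u1 u2 v x"
    using abs_increment_le by metis
  obtain K where K: "\<And>F u1 u2 v. finite F \<Longrightarrow> \<bar>u1\<bar> \<le> M \<Longrightarrow> \<bar>u2\<bar> \<le> M \<Longrightarrow> a \<le> v \<Longrightarrow> v \<le> 1 - 2 * \<delta> \<Longrightarrow>
    (\<Sum>x\<in>F. majorant u1 u2 v x) \<le> K * \<bar>u1 - u2\<bar> powr (v - 1 / \<alpha>)"
    using sum_majorant_le[OF assms] by metis
  have "(\<Sum>x\<in>F. \<bar>increment u1 u2 v x\<bar>) \<le> A * K * \<bar>u1 - u2\<bar> powr (v - 1 / \<alpha>)"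
    if "finite F" "\<bar>u1\<bar> \<le> M" "\<bar>u2\<bar> \<le> M" "a \<le> v" "v \<le> 1 - 2 * \<delta>" for F u1 u2 v
  proof -
    have "0 < 1 / \<alpha>" using alpha by simp
    then have "1 / \<alpha> < v" "v < 1 + 1 / \<alpha>" using assms that delta by linarith+
    then have "(\<Sum>x\<in>F. \<bar>increment u1 u2 v x\<bar>) \<le> A * (\<Sum>x\<in>F. majorant u1 u2 v x)"
      unfolding sum_distrib_left by (intro sum_mono A(2))
    also have "\<dots> \<le> A * (K * \<bar>u1 - u2\<bar> powr (v - 1 / \<alpha>))"
      using K[OF that] A(1) by (rule mult_left_mono)
    finally show ?thesis by (simp add: mult.assoc)
  qed
  then show ?thesis by (rule that)
qed

text \<open>\<open>increment u 0 v\<close> is the series defining \<open>Xser\<close>, since \<open>2 powr j * 0 - k = - k\<close>.\<close>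

lemma hoelder_quotient_bounded:
  assumes "1 / \<alpha> < a"
  shows "bdd_above ((\<lambda>(u1, u2, v). \<bar>infsum (increment u1 0 v) UNIV - infsum (increment u2 0 v) UNIV\<bar> /
           \<bar>u1 - u2\<bar> powr (v - 1 / \<alpha>)) ` ({-M..M} \<times> {-M..M} \<times> {a..1 - 2 * \<delta>}))"
proof -
  obtain K where K: "\<And>F u1 u2 v. finite F \<Longrightarrow> \<bar>u1\<bar> \<le> M \<Longrightarrow> \<bar>u2\<bar> \<le> M \<Longrightarrow> a \<le> v \<Longrightarrow> v \<le> 1 - 2 * \<delta> \<Longrightarrow>
    (\<Sum>x\<in>F. \<bar>increment u1 u2 v x\<bar>) \<le> K * \<bar>u1 - u2\<bar> powr (v - 1 / \<alpha>)"
    using sum_abs_increment_le[OF assms] by blast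
  have "\<bar>infsum (increment u1 0 v) UNIV - infsum (increment u2 0 v) UNIV\<bar> / \<bar>u1 - u2\<bar> powr (v - 1 / \<alpha>) \<le> max K 0"
    if u: "\<bar>u1\<bar> \<le> M" "\<bar>u2\<bar> \<le> M" and v: "a \<le> v" "v \<le> 1 - 2 * \<delta>" for u1 u2 v
  proof (cases "u1 = u2")
    case False
    have summable: "increment u1' u2' v summable_on UNIV" "\<bar>infsum (increment u1' u2' v) UNIV\<bar> \<le> K * \<bar>u1' - u2'\<bar> powr (v - 1 / \<alpha>)"
      if "\<bar>u1'\<bar> \<le> M" "\<bar>u2'\<bar> \<le> M" for u1' u2'
      using abs_summable_if_finite_sums_bounded[OF K[OF _ that v]] by blast+
    have s1: "increment u1 0 v summable_on UNIV" and s2: "increment u2 0 v summable_on UNIV"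
      using summable(1)[of u1 0] summable(1)[of u2 0] u M by auto
    have "infsum (increment u1 0 v) UNIV - infsum (increment u2 0 v) UNIV
        = infsum (increment u1 0 v) UNIV + infsum (\<lambda>x. - increment u2 0 v x) UNIV"
      by (simp add: infsum_uminus)
    also have "\<dots> = infsum (\<lambda>x. increment u1 0 v x + - increment u2 0 v x) UNIV"
      by (rule infsum_add[OF s1 summable_on_uminus[THEN iffD2, OF s2], symmetric])
    also have "(\<lambda>x. increment u1 0 v x + - increment u2 0 v x) = increment u1 u2 v"
      by (auto simp: increment_def algebra_simps)
    finally have "infsum (increment u1 0 v) UNIV - infsum (increment u2 0 v) UNIV = infsum (increment u1 u2 v) UNIV" .
    moreover have "K * \<bar>u1 - u2\<bar> powr (v - 1 / \<alpha>) \<le> max K 0 * \<bar>u1 - u2\<bar> powr (v - 1 / \<alpha>)"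
      by (intro mult_right_mono) auto
    ultimately have "\<bar>infsum (increment u1 0 v) UNIV - infsum (increment u2 0 v) UNIV\<bar>
        \<le> max K 0 * \<bar>u1 - u2\<bar> powr (v - 1 / \<alpha>)"
      using summable(2)[OF u] by linarith
    then show ?thesis using False by (simp add: divide_le_eq)
  qed simp
  then show ?thesis by (intro bdd_aboveI[where M="max K 0"]) auto
qed

end

lemma C3_derivatives:
  assumes "C3 f"
  shows "(f has_real_derivative deriv f x) (at x)"
    and "(deriv f has_real_derivative deriv (deriv f) x) (at x)"
    and "continuous_on UNIV (deriv (deriv f))"
proof -
  have "(deriv ^^ i) f differentiable (at x)" if "i < 3" for i x
    using assms that unfolding C3_def by blast
  from this[of 0] this[of 1] this[of 2]
  have "f differentiable (at x)" "deriv f differentiable (at x)" "deriv (deriv f) differentiable (at x)" for x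
    by (simp_all add: numeral_2_eq_2)
  then show "(f has_real_derivative deriv f x) (at x)"
    and "(deriv f has_real_derivative deriv (deriv f) x) (at x)"
    and "continuous_on UNIV (deriv (deriv f))"
    by (simp_all add: DERIV_deriv_iff_real_differentiable differentiable_imp_continuous_within
        continuous_at_imp_continuous_on)
qed

lemma ONB_wavelet_orthonormal:
  assumes "ONB_wavelet \<psi>"
  shows "(\<integral>x. wav \<psi> j k x * wav \<psi> j' k' x \<partial>lborel) = (if (j, k) = (j', k') then 1 else 0)"
  using assms unfolding ONB_wavelet_def by blast

lemma ONB_wavelet_nonzero:
  assumes "ONB_wavelet \<psi>"
  shows "\<exists>x. \<psi> x \<noteq> 0"
proof (rule ccontr)
  assume "\<not> (\<exists>x. \<psi> x \<noteq> 0)"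
  then have "(\<lambda>x. wav \<psi> 0 0 x * wav \<psi> 0 0 x) = (\<lambda>x. 0)" by (auto simp: wav_def)
  moreover have "(\<integral>x. wav \<psi> 0 0 x * wav \<psi> 0 0 x \<partial>lborel) = 1"
    using ONB_wavelet_orthonormal[OF assms] by simp
  ultimately show False by simp
qed

lemma ONB_wavelet_orthogonal_dilates:
  assumes "ONB_wavelet \<psi>" "1 \<le> j"
  shows "(\<integral>x. \<psi> x * \<psi> (2 ^ j * x - real_of_int k) \<partial>lborel) = 0"
proof -
  have "wav \<psi> (int j) k x * wav \<psi> 0 0 x = 2 powr (real j / 2) * (\<psi> x * \<psi> (2 ^ j * x - real_of_int k))" for x
    by (simp add: wav_def powr_realpow)
  then have "(\<integral>x. wav \<psi> (int j) k x * wav \<psi> 0 0 x \<partial>lborel)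
      = 2 powr (real j / 2) * (\<integral>x. \<psi> x * \<psi> (2 ^ j * x - real_of_int k) \<partial>lborel)"
    by simp
  moreover have "(\<integral>x. wav \<psi> (int j) k x * wav \<psi> 0 0 x \<partial>lborel) = 0"
    using ONB_wavelet_orthonormal[OF assms(1)] assms(2) by simp
  ultimately show ?thesis by simp
qed

lemma compact_wavelet_if_ONB_wavelet:
  assumes "C3 \<psi>" "bounded {x. \<psi> x \<noteq> 0}" "ONB_wavelet \<psi>"
  obtains R where "compact_wavelet \<psi> (deriv \<psi>) (deriv (deriv \<psi>)) R"
proof -
  obtain R0 where "\<forall>x\<in>{x. \<psi> x \<noteq> 0}. norm x \<le> R0" using assms(2) bounded_iff by blast
  then have R0: "\<bar>x\<bar> \<le> R0" if "\<psi> x \<noteq> 0" for x using that by simp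
  have "compact_wavelet \<psi> (deriv \<psi>) (deriv (deriv \<psi>)) (max 1 R0)"
  proof
    show "\<psi> x = 0" if "max 1 R0 < \<bar>x\<bar>" for x
      using R0[of x] that by linarith
  qed (use C3_derivatives[OF assms(1)] ONB_wavelet_nonzero[OF assms(3)]
      ONB_wavelet_orthogonal_dilates[OF assms(3)] in simp_all)
  then show ?thesis by (rule that)
qed

theorem mainTheorem4:
  fixes P :: "'w measure"
    and \<alpha> :: real
    and \<psi> :: "real \<Rightarrow> real"
    and \<epsilon> :: "int \<Rightarrow> int \<Rightarrow> 'w \<Rightarrow> real"
    and \<Omega>0 \<Omega>1 :: "'w set"
    and \<omega> :: 'w
    and M a b :: real
  assumes prob: "prob_space P"
    and alpha: "1 < \<alpha>" "\<alpha> < 2"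
    and psi_C3: "C3 \<psi>"
    and psi_supp: "bounded {x. \<psi> x \<noteq> 0}"
    and psi_ONB: "ONB_wavelet \<psi>"
    and eps_meas: "\<And>j k. \<epsilon> j k \<in> borel_measurable P"
    and Omega0_ev: "\<Omega>0 \<in> sets P" "prob_space.prob P \<Omega>0 = 1"
    and Omega0: "\<And>\<eta>. \<eta> > 0 \<Longrightarrow> \<exists>C. C \<in> borel_measurable P \<and> (\<forall>w. 0 < C w) \<and>
        (\<forall>w\<in>\<Omega>0. \<forall>j k. \<bar>\<epsilon> j k w\<bar> \<le>
           C w * (3 + \<bar>real_of_int j\<bar>) powr (1 / \<alpha> + \<eta>) * (3 + \<bar>real_of_int k\<bar>) powr (1 / \<alpha> + \<eta>))"
    and Omega1_ev: "\<Omega>1 \<in> sets P" "prob_space.prob P \<Omega>1 = 1"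
    and Omega1: "\<And>l. l > 0 \<Longrightarrow> \<exists>C'. C' \<in> borel_measurable P \<and> (\<forall>w. 0 < C' w) \<and>
        (\<forall>w\<in>\<Omega>1. \<forall>j k. 0 \<le> j \<longrightarrow> \<bar>real_of_int k\<bar> * 2 powr (- real_of_int j) \<le> l \<longrightarrow>
           \<bar>\<epsilon> j k w\<bar> \<le> C' w * 2 powr (real_of_int j / \<alpha>))"
    and omega: "\<omega> \<in> \<Omega>0 \<inter> \<Omega>1"
    and M: "0 < M"
    and ab: "1 / \<alpha> < a" "a < b" "b < 1"
  shows "bdd_above ((\<lambda>(u1, u2, v). \<bar>Xser \<alpha> \<psi> \<epsilon> u1 v \<omega> - Xser \<alpha> \<psi> \<epsilon> u2 v \<omega>\<bar> /
                        \<bar>u1 - u2\<bar> powr (v - 1 / \<alpha>))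
           ` ({-M..M} \<times> {-M..M} \<times> {a..b}))"
proof -
  obtain R where wavelet: "compact_wavelet \<psi> (deriv \<psi>) (deriv (deriv \<psi>)) R"
    using compact_wavelet_if_ONB_wavelet[OF psi_C3 psi_supp psi_ONB] .
  define \<delta> where "\<delta> = (1 - b) / 2"
  have "0 < \<delta>" "2 * \<delta> = 1 - b" "0 < 2 * M" using ab M by (simp_all add: \<delta>_def)
  obtain C where C: "\<forall>w. 0 < C w" "\<forall>w\<in>\<Omega>0. \<forall>j k. \<bar>\<epsilon> j k w\<bar> \<le>
      C w * (3 + \<bar>real_of_int j\<bar>) powr (1 / \<alpha> + \<delta>) * (3 + \<bar>real_of_int k\<bar>) powr (1 / \<alpha> + \<delta>)"
    using Omega0[OF \<open>0 < \<delta>\<close>] by blast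
  obtain C' where C': "\<forall>w. 0 < C' w" "\<forall>w\<in>\<Omega>1. \<forall>j k. 0 \<le> j \<longrightarrow> \<bar>real_of_int k\<bar> * 2 powr (- real_of_int j) \<le> 2 * M \<longrightarrow>
      \<bar>\<epsilon> j k w\<bar> \<le> C' w * 2 powr (real_of_int j / \<alpha>)"
    using Omega1[OF \<open>0 < 2 * M\<close>] by blast
  interpret wavelet_series \<psi> "deriv \<psi>" "deriv (deriv \<psi>)" R "\<lambda>j k. \<epsilon> j k \<omega>" \<alpha> \<delta> M "C \<omega>" "C' \<omega>"
  proof (intro wavelet_series.intro wavelet wavelet_coefficients.intro)
    show "1 / \<alpha> + 2 * \<delta> < 1" using \<open>2 * \<delta> = 1 - b\<close> ab by linarith
  qed (use alpha \<open>0 < \<delta>\<close> M C C' omega in \<open>auto intro: less_imp_le\<close>)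
  have "Xser \<alpha> \<psi> \<epsilon> u v \<omega> = infsum (increment u 0 v) UNIV" for u v
    by (simp add: Xser_def increment_def case_prod_beta)
  with hoelder_quotient_bounded[OF ab(1)] \<open>2 * \<delta> = 1 - b\<close> show ?thesis by simp
qed

end
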